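(* Let $s\ge t$ be real numbers, $0<p_0<p_1\le\infty$ and $0<q_0,q_1\le\infty$, and assume that either $s>t$ or $q_0<q_1$. Then the embedding $$\ell^{q_0}\big(2^{js}\cdot\ell^{p_0}\big)_{j=0}^\infty\hookrightarrow\ell^{q_1}\big(2^{jt}\cdot\ell^{p_1}\big)_{j=0}^\infty$$ is finitely strictly singular (and in particular strictly singular).
   Context: For quasi-normed spaces $X_j$ and $q\in(0,\infty]$, $\ell^q(X_j)_{j=0}^\infty$ is the space of sequences $x=(x_j)_{j\ge0}$, $x_j\in X_j$, with $\|x\|=(\sum_j\|x_j\|_{X_j}^q)^{1/q}<\infty$ (supremum if $q=\infty$). For $\lambda>0$, $\lambda\cdot\ell^p$ denotes $\ell^p=\ell^p(\mathbb{N})$ with quasi-norm $\|y\|_{\lambda\cdot\ell^p}=\lambda\|y\|_{\ell^p}$; so $\|x\|_{\ell^q(2^{js}\cdot\ell^p)_j}=(\sum_j(2^{js}\|x_j\|_{\ell^p})^q)^{1/q}$. Bernstein numbers: $b_n(T)=\sup\{\inf_{x\in X_n,\|x\|=1}\|Tx\|:\dim X_n=n\}$; $T$ finitely strictly singular means $b_n(T)\to0$; strictly singular means no infinite-dimensional subspace on which $T$ is an isomorphism onto its image. *)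

theory Defs
  imports "HOL-Analysis.Analysis"
begin

text \<open>Exponents p, q range over (0, \<infinity>] and are modelled as extended reals.\<close>

definition lp_mem :: "ereal \<Rightarrow> (nat \<Rightarrow> real) \<Rightarrow> bool" where
  "lp_mem p y \<longleftrightarrow>
     (if p = \<infinity> then bdd_above (range (\<lambda>k. \<bar>y k\<bar>))
      else summable (\<lambda>k. \<bar>y k\<bar> powr real_of_ereal p))"

definition lp_norm :: "ereal \<Rightarrow> (nat \<Rightarrow> real) \<Rightarrow> real" where
  "lp_norm p y =
     (if p = \<infinity> then (SUP k. \<bar>y k\<bar>)
      else (\<Sum>k. \<bar>y k\<bar> powr real_of_ereal p) powr (1 / real_of_ereal p))"

text \<open>Elements of the mixed space: double sequences x, x j = j-th block.\<close>
type_synonym dseq = "nat \<Rightarrow> nat \<Rightarrow> real"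

definition mixed_mem :: "ereal \<Rightarrow> real \<Rightarrow> ereal \<Rightarrow> dseq \<Rightarrow> bool" where
  "mixed_mem q s p x \<longleftrightarrow>
     (\<forall>j. lp_mem p (x j)) \<and> lp_mem q (\<lambda>j. 2 powr (real j * s) * lp_norm p (x j))"

definition mixed_norm :: "ereal \<Rightarrow> real \<Rightarrow> ereal \<Rightarrow> dseq \<Rightarrow> real" where
  "mixed_norm q s p x = lp_norm q (\<lambda>j. 2 powr (real j * s) * lp_norm p (x j))"

definition mixed_space :: "ereal \<Rightarrow> real \<Rightarrow> ereal \<Rightarrow> dseq set" where
  "mixed_space q s p = {x. mixed_mem q s p x}"

definition lin_subspace :: "dseq set \<Rightarrow> bool" where
  "lin_subspace V \<longleftrightarrow> (\<lambda>j k. 0) \<in> V \<and>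
     (\<forall>x\<in>V. \<forall>y\<in>V. (\<lambda>j k. x j k + y j k) \<in> V) \<and>
     (\<forall>c. \<forall>x\<in>V. (\<lambda>j k. c * x j k) \<in> V)"

definition lin_comb :: "nat \<Rightarrow> (nat \<Rightarrow> real) \<Rightarrow> (nat \<Rightarrow> dseq) \<Rightarrow> dseq" where
  "lin_comb n c v = (\<lambda>j k. \<Sum>i<n. c i * v i j k)"

definition lin_indep :: "nat \<Rightarrow> (nat \<Rightarrow> dseq) \<Rightarrow> bool" where
  "lin_indep n v \<longleftrightarrow> (\<forall>c. lin_comb n c v = (\<lambda>j k. 0) \<longrightarrow> (\<forall>i<n. c i = 0))"

definition subspace_dim :: "dseq set \<Rightarrow> nat \<Rightarrow> dseq set \<Rightarrow> bool" where
  "subspace_dim X n V \<longleftrightarrow> V \<subseteq> X \<and>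
     (\<exists>v. lin_indep n v \<and> V = {lin_comb n c v | c. True})"

definition inf_dim_subspace :: "dseq set \<Rightarrow> dseq set \<Rightarrow> bool" where
  "inf_dim_subspace X M \<longleftrightarrow> M \<subseteq> X \<and> lin_subspace M \<and>
     (\<forall>n. \<exists>v. (\<forall>i<n. v i \<in> M) \<and> lin_indep n v)"

definition bernstein ::
  "dseq set \<Rightarrow> (dseq \<Rightarrow> real) \<Rightarrow> (dseq \<Rightarrow> real) \<Rightarrow> (dseq \<Rightarrow> dseq) \<Rightarrow> nat \<Rightarrow> ereal" where
  "bernstein X nX nY T n =
     (SUP V \<in> {V. subspace_dim X n V}. INF x \<in> {x \<in> V. nX x = 1}. ereal (nY (T x)))"

definition fin_strictly_singular ::
  "dseq set \<Rightarrow> (dseq \<Rightarrow> real) \<Rightarrow> (dseq \<Rightarrow> real) \<Rightarrow> (dseq \<Rightarrow> dseq) \<Rightarrow> bool" where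
  "fin_strictly_singular X nX nY T \<longleftrightarrow> (bernstein X nX nY T \<longlonglongrightarrow> 0)"

definition strictly_singular ::
  "dseq set \<Rightarrow> (dseq \<Rightarrow> real) \<Rightarrow> (dseq \<Rightarrow> real) \<Rightarrow> (dseq \<Rightarrow> dseq) \<Rightarrow> bool" where
  "strictly_singular X nX nY T \<longleftrightarrow>
     \<not> (\<exists>M. inf_dim_subspace X M \<and>
           (\<exists>c C. 0 < c \<and> 0 < C \<and> (\<forall>x\<in>M. c * nX x \<le> nY (T x) \<and> nY (T x) \<le> C * nX x)))"

end

theory Submission
  imports Defs
begin

(* Weight the entry x j k by 2^(j sigma), where sigma = (s + t) / 2 if t < s and sigma = s if
   t = s and q0 < q1; every element of the source space then becomes a c0 function of (j, k).
   In an n-dimensional space of c0 functions some element has sup norm 1 and attains modulus 1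
   at n points.  Such a peaking element x has a large source norm, because one block carries at
   most ||x||^p0 peaks and only few blocks can carry one.  On the other hand, the entry bound and
   Hoelder interpolation between l^p0 and l^p1 bound its target norm by C ||x||^L with L < 1.
   Normalising x gives unit vectors in every n-dimensional subspace whose images tend to zero, so
   the Bernstein numbers tend to zero; an embedding that is an isomorphism on an
   infinite-dimensional subspace would bound them from below. *)

section \<open>Functions vanishing at infinity\<close>

definition c0 :: "('i \<Rightarrow> real) \<Rightarrow> bool" where
  "c0 f \<longleftrightarrow> (\<forall>e>0. finite {i. e \<le> \<bar>f i\<bar>})"

lemma c0_mono:
  assumes "c0 g" "\<And>i. \<bar>f i\<bar> \<le> \<bar>g i\<bar>"
  shows "c0 f"
  unfolding c0_def
proof (intro allI impI)
  fix e :: real assume "0 < e"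
  hence "finite {i. e \<le> \<bar>g i\<bar>}" using assms(1) by (simp add: c0_def)
  thus "finite {i. e \<le> \<bar>f i\<bar>}" by (rule finite_subset[rotated]) (use assms(2) order_trans in blast)
qed

lemma c0_add: "c0 f \<Longrightarrow> c0 g \<Longrightarrow> c0 (\<lambda>i. f i + g i)"
  unfolding c0_def
proof (intro allI impI)
  fix e :: real assume "\<forall>e>0. finite {i. e \<le> \<bar>f i\<bar>}" "\<forall>e>0. finite {i. e \<le> \<bar>g i\<bar>}" "0 < e"
  hence "finite ({i. e/2 \<le> \<bar>f i\<bar>} \<union> {i. e/2 \<le> \<bar>g i\<bar>})"
    using half_gt_zero by blast
  moreover have "{i. e \<le> \<bar>f i + g i\<bar>} \<subseteq> {i. e/2 \<le> \<bar>f i\<bar>} \<union> {i. e/2 \<le> \<bar>g i\<bar>}" by auto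
  ultimately show "finite {i. e \<le> \<bar>f i + g i\<bar>}" by (rule finite_subset[rotated])
qed

lemma c0_scale: "c0 f \<Longrightarrow> c0 (\<lambda>i. c * f i)"
proof (cases "c = 0")
  case False
  assume f: "c0 f"
  have "{i. e \<le> \<bar>c * f i\<bar>} = {i. e / \<bar>c\<bar> \<le> \<bar>f i\<bar>}" for e
    using False by (auto simp: abs_mult field_simps)
  thus ?thesis using f False by (simp add: c0_def)
qed (simp add: c0_def)

lemma c0_sum: "finite L \<Longrightarrow> (\<And>l. l \<in> L \<Longrightarrow> c0 (v l)) \<Longrightarrow> c0 (\<lambda>i. \<Sum>l\<in>L. c l * v l i)"
proof (induction L rule: finite_induct)
  case empty thus ?case by (simp add: c0_def)
next
  case (insert a L) thus ?case by (simp add: c0_add c0_scale)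
qed

lemma c0_bounded:
  assumes "c0 f"
  obtains B where "0 < B" "\<And>i. \<bar>f i\<bar> \<le> B"
proof -
  have fin: "finite {i. 1 \<le> \<bar>f i\<bar>}" using assms by (auto simp: c0_def)
  define B where "B = Max (insert 1 (abs ` f ` {i. 1 \<le> \<bar>f i\<bar>}))"
  have B1: "1 \<le> B" unfolding B_def using fin by (intro Max_ge) auto
  have "\<bar>f i\<bar> \<le> B" for i
  proof (cases "1 \<le> \<bar>f i\<bar>")
    case True thus ?thesis unfolding B_def using fin by (intro Max_ge) auto
  qed (use B1 in auto)
  with B1 show ?thesis by (intro that[of B]) simp_all
qed

lemma c0_bounded_below_one:
  assumes "c0 f" "\<And>i. i \<in> A \<Longrightarrow> \<bar>f i\<bar> < 1"
  obtains \<mu> where "\<mu> < 1" "\<And>i. i \<in> A \<Longrightarrow> \<bar>f i\<bar> \<le> \<mu>"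
proof -
  define H where "H = {i. 1/2 \<le> \<bar>f i\<bar>}"
  have fin: "finite H" using assms(1) unfolding c0_def H_def by (meson half_gt_zero zero_less_one)
  define \<mu> where "\<mu> = Max (insert (1/2) (abs ` f ` (H \<inter> A)))"
  have "\<mu> < 1" unfolding \<mu>_def using fin assms(2) by (subst Max_less_iff) auto
  moreover have "\<bar>f i\<bar> \<le> \<mu>" if "i \<in> A" for i
  proof -
    have "1/2 \<le> \<mu>" "i \<in> H \<Longrightarrow> \<bar>f i\<bar> \<le> \<mu>" unfolding \<mu>_def using fin that by (intro Max_ge; simp)+
    thus ?thesis by (cases "i \<in> H") (auto simp: H_def)
  qed
  ultimately show ?thesis by (intro that)
qed

lemma c0_SigmaI:
  assumes "\<And>j. c0 (f j)" "c0 B" "\<And>j k. \<bar>f j k\<bar> \<le> B j"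
  shows "c0 (\<lambda>(j, k). f j k)"
  unfolding c0_def
proof (intro allI impI)
  fix e :: real assume e: "0 < e"
  have "{i. e \<le> \<bar>case i of (j, k) \<Rightarrow> f j k\<bar>} \<subseteq> (SIGMA j:{j. e \<le> \<bar>B j\<bar>}. {k. e \<le> \<bar>f j k\<bar>})"
  proof (clarsimp)
    fix j k assume "e \<le> \<bar>f j k\<bar>"
    thus "e \<le> \<bar>B j\<bar>" using assms(3)[of j k] by linarith
  qed
  moreover have "finite (SIGMA j:{j. e \<le> \<bar>B j\<bar>}. {k. e \<le> \<bar>f j k\<bar>})"
    using assms(1,2) e by (intro finite_SigmaI) (auto simp: c0_def)
  ultimately show "finite {i. e \<le> \<bar>case i of (j, k) \<Rightarrow> f j k\<bar>}" by (rule finite_subset)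
qed

section \<open>Sequence spaces \<open>\<ell>\<^sup>p\<close>\<close>

lemma lp_finite_exponent: "lp_mem (ereal P) y \<longleftrightarrow> summable (\<lambda>k. \<bar>y k\<bar> powr P)"
  "lp_norm (ereal P) y = (\<Sum>k. \<bar>y k\<bar> powr P) powr (1/P)"
  by (simp_all add: lp_mem_def lp_norm_def)

lemma lp_infinite_exponent: "lp_mem \<infinity> y \<longleftrightarrow> bdd_above (range (\<lambda>k. \<bar>y k\<bar>))"
  "lp_norm \<infinity> y = (SUP k. \<bar>y k\<bar>)"
  by (simp_all add: lp_mem_def lp_norm_def)

lemma ereal_pos_cases:
  assumes "0 < (p::ereal)"
  obtains P where "p = ereal P" "0 < P" | "p = \<infinity>"
  using assms by (cases p) auto

lemma powr_powr_inverse: "0 \<le> (x::real) \<Longrightarrow> 0 < P \<Longrightarrow> (x powr P) powr (1/P) = x"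
  by (simp add: powr_powr)

lemma powr_inverse_powr: "0 \<le> (x::real) \<Longrightarrow> 0 < P \<Longrightarrow> (x powr (1/P)) powr P = x"
  by (simp add: powr_powr)

lemma abs_le_lp_norm:
  assumes "0 < p" "lp_mem p y"
  shows "\<bar>y k\<bar> \<le> lp_norm p y"
  using assms(1)
proof (cases rule: ereal_pos_cases)
  case (1 P)
  have s: "summable (\<lambda>k. \<bar>y k\<bar> powr P)" using assms 1 by (simp add: lp_finite_exponent)
  have "sum (\<lambda>k. \<bar>y k\<bar> powr P) {k} \<le> (\<Sum>k. \<bar>y k\<bar> powr P)"
    by (rule sum_le_suminf[OF s]) auto
  hence "\<bar>y k\<bar> powr P \<le> (\<Sum>k. \<bar>y k\<bar> powr P)" by simp
  hence "(\<bar>y k\<bar> powr P) powr (1/P) \<le> (\<Sum>k. \<bar>y k\<bar> powr P) powr (1/P)"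
    by (intro powr_mono2) (use 1 in auto)
  thus ?thesis using 1 by (simp add: powr_powr_inverse lp_finite_exponent)
next
  case 2
  thus ?thesis using assms by (auto simp: lp_infinite_exponent intro: cSUP_upper)
qed

lemma lp_norm_nonneg:
  assumes "0 < p" "lp_mem p y"
  shows "0 \<le> lp_norm p y"
  using abs_le_lp_norm[OF assms, of 0] by linarith

lemma lp_mono:
  assumes "0 < p" "lp_mem p z" "\<And>k. \<bar>y k\<bar> \<le> \<bar>z k\<bar>"
  shows "lp_mem p y \<and> lp_norm p y \<le> lp_norm p z"
  using assms(1)
proof (cases rule: ereal_pos_cases)
  case (1 P)
  have s: "summable (\<lambda>k. \<bar>z k\<bar> powr P)" using assms 1 by (simp add: lp_finite_exponent)
  have le: "\<bar>y k\<bar> powr P \<le> \<bar>z k\<bar> powr P" for k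
    using assms(3)[of k] 1 by (intro powr_mono2) auto
  have s2: "summable (\<lambda>k. \<bar>y k\<bar> powr P)"
    by (rule summable_comparison_test'[OF s, of 0]) (use le in auto)
  have "(\<Sum>k. \<bar>y k\<bar> powr P) \<le> (\<Sum>k. \<bar>z k\<bar> powr P)"
    by (rule suminf_le[OF le s2 s])
  hence "(\<Sum>k. \<bar>y k\<bar> powr P) powr (1/P) \<le> (\<Sum>k. \<bar>z k\<bar> powr P) powr (1/P)"
    using 1 by (intro powr_mono2) (auto intro: suminf_nonneg s2)
  thus ?thesis using s2 1 by (simp add: lp_finite_exponent)
next
  case 2
  have b: "bdd_above (range (\<lambda>k. \<bar>z k\<bar>))" using assms 2 by (simp add: lp_infinite_exponent)
  have b2: "bdd_above (range (\<lambda>k. \<bar>y k\<bar>))"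
    using b assms(3) by (auto simp: bdd_above_def intro: order_trans)
  have "(SUP k. \<bar>y k\<bar>) \<le> (SUP k. \<bar>z k\<bar>)"
    by (rule cSUP_mono) (use b assms(3) in auto)
  thus ?thesis using b2 2 by (simp add: lp_infinite_exponent)
qed

lemma lp_zero: "0 < p \<Longrightarrow> lp_mem p (\<lambda>k. 0) \<and> lp_norm p (\<lambda>k. 0) = 0"
  by (cases rule: ereal_pos_cases) (auto simp: lp_finite_exponent lp_infinite_exponent)

lemma cSUP_abs_mult:
  fixes y :: "'a \<Rightarrow> real"
  assumes b: "bdd_above (range (\<lambda>k. \<bar>y k\<bar>))"
  shows "bdd_above (range (\<lambda>k. \<bar>c * y k\<bar>)) \<and> (SUP k. \<bar>c * y k\<bar>) = \<bar>c\<bar> * (SUP k. \<bar>y k\<bar>)"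
proof
  obtain B where "\<And>k. \<bar>y k\<bar> \<le> B" using b by (auto simp: bdd_above_def)
  hence "\<bar>c * y k\<bar> \<le> \<bar>c\<bar> * B" for k by (simp add: abs_mult mult_left_mono)
  thus b2: "bdd_above (range (\<lambda>k. \<bar>c * y k\<bar>))" by (auto simp: bdd_above_def)
  show "(SUP k. \<bar>c * y k\<bar>) = \<bar>c\<bar> * (SUP k. \<bar>y k\<bar>)"
  proof (cases "c = 0")
    case False
    show ?thesis
    proof (rule antisym)
      show "(SUP k. \<bar>c * y k\<bar>) \<le> \<bar>c\<bar> * (SUP k. \<bar>y k\<bar>)"
        by (rule cSUP_least) (auto simp: abs_mult intro!: mult_left_mono cSUP_upper b)
      have "(SUP k. \<bar>y k\<bar>) \<le> (SUP k. \<bar>c * y k\<bar>) / \<bar>c\<bar>"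
      proof (rule cSUP_least)
        fix k
        have "\<bar>c * y k\<bar> \<le> (SUP k. \<bar>c * y k\<bar>)" by (rule cSUP_upper[OF _ b2]) auto
        thus "\<bar>y k\<bar> \<le> (SUP k. \<bar>c * y k\<bar>) / \<bar>c\<bar>" using False
          by (simp add: abs_mult field_simps)
      qed auto
      thus "\<bar>c\<bar> * (SUP k. \<bar>y k\<bar>) \<le> (SUP k. \<bar>c * y k\<bar>)" using False
        by (simp add: field_simps)
    qed
  qed simp
qed

lemma lp_scale:
  assumes "0 < p" "lp_mem p y"
  shows "lp_mem p (\<lambda>k. c * y k) \<and> lp_norm p (\<lambda>k. c * y k) = \<bar>c\<bar> * lp_norm p y"
  using assms(1)
proof (cases rule: ereal_pos_cases)
  case (1 P)
  have s: "summable (\<lambda>k. \<bar>y k\<bar> powr P)" using assms 1 by (simp add: lp_finite_exponent)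
  have eq: "\<bar>c * y k\<bar> powr P = \<bar>c\<bar> powr P * \<bar>y k\<bar> powr P" for k
    by (simp add: abs_mult powr_mult)
  have s2: "summable (\<lambda>k. \<bar>c * y k\<bar> powr P)" unfolding eq by (intro summable_mult s)
  have "(\<Sum>k. \<bar>c * y k\<bar> powr P) powr (1/P) = (\<bar>c\<bar> powr P * (\<Sum>k. \<bar>y k\<bar> powr P)) powr (1/P)"
    unfolding eq using suminf_mult[OF s] by simp
  also have "\<dots> = \<bar>c\<bar> * (\<Sum>k. \<bar>y k\<bar> powr P) powr (1/P)"
    using 1 by (simp add: powr_mult suminf_nonneg[OF s] powr_powr_inverse)
  finally show ?thesis using s2 1 by (simp add: lp_finite_exponent)
next
  case 2
  thus ?thesis using assms cSUP_abs_mult[of y c] by (simp add: lp_infinite_exponent)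
qed

lemma suminf_powr_le:
  assumes "0 < P" "P \<le> R" "lp_mem (ereal P) y" "\<And>k. \<bar>y k\<bar> \<le> M"
  shows "summable (\<lambda>k. \<bar>y k\<bar> powr R) \<and>
    (\<Sum>k. \<bar>y k\<bar> powr R) \<le> M powr (R - P) * (\<Sum>k. \<bar>y k\<bar> powr P)"
proof -
  have s: "summable (\<lambda>k. \<bar>y k\<bar> powr P)" using assms by (simp add: lp_finite_exponent)
  have le: "\<bar>y k\<bar> powr R \<le> M powr (R - P) * \<bar>y k\<bar> powr P" for k
  proof -
    have "\<bar>y k\<bar> powr R = \<bar>y k\<bar> powr (R - P) * \<bar>y k\<bar> powr P"
      by (simp flip: powr_add)
    also have "\<dots> \<le> M powr (R - P) * \<bar>y k\<bar> powr P"
      using assms by (intro mult_right_mono powr_mono2) auto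
    finally show ?thesis .
  qed
  have s2: "summable (\<lambda>k. \<bar>y k\<bar> powr R)"
    by (rule summable_comparison_test'[OF summable_mult[OF s], of 0]) (use le in auto)
  have "(\<Sum>k. \<bar>y k\<bar> powr R) \<le> (\<Sum>k. M powr (R - P) * \<bar>y k\<bar> powr P)"
    by (rule suminf_le[OF le s2 summable_mult[OF s]])
  also have "\<dots> = M powr (R - P) * (\<Sum>k. \<bar>y k\<bar> powr P)" by (rule suminf_mult[OF s])
  finally show ?thesis using s2 by simp
qed

lemma lp_norm_mono_exponent:
  assumes "0 < P" "ereal P \<le> r" "lp_mem (ereal P) y"
  shows "lp_mem r y \<and> lp_norm r y \<le> lp_norm (ereal P) y"
proof -
  have r0: "0 < r" using assms by (metis ereal_less(2) order_less_le_trans zero_ereal_def)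
  show ?thesis using r0
  proof (cases rule: ereal_pos_cases)
    case (1 R)
    have PR: "P \<le> R" using assms 1 by simp
    let ?N = "lp_norm (ereal P) y"
    have bd: "\<bar>y k\<bar> \<le> ?N" for k using abs_le_lp_norm[OF _ assms(3)] assms by simp
    have N0: "0 \<le> ?N" using lp_norm_nonneg[OF _ assms(3)] assms by simp
    from suminf_powr_le[OF assms(1) PR assms(3) bd]
    have e: "summable (\<lambda>k. \<bar>y k\<bar> powr R)"
      "(\<Sum>k. \<bar>y k\<bar> powr R) \<le> ?N powr (R - P) * (\<Sum>k. \<bar>y k\<bar> powr P)" by auto
    have S0: "0 \<le> (\<Sum>k. \<bar>y k\<bar> powr P)" using assms(3) by (auto simp: lp_finite_exponent intro: suminf_nonneg)
    have "(\<Sum>k. \<bar>y k\<bar> powr P) = ?N powr P"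
      by (simp add: lp_finite_exponent powr_inverse_powr[OF S0 assms(1)])
    hence "(\<Sum>k. \<bar>y k\<bar> powr R) \<le> ?N powr R" using e(2)
      by (simp flip: powr_add)
    hence "(\<Sum>k. \<bar>y k\<bar> powr R) powr (1/R) \<le> (?N powr R) powr (1/R)"
      using 1 by (intro powr_mono2) (auto intro: suminf_nonneg e(1))
    also have "\<dots> = ?N" using N0 1 by (simp add: powr_powr_inverse)
    finally show ?thesis using 1 e by (simp add: lp_finite_exponent)
  next
    case 2
    have bd: "\<bar>y k\<bar> \<le> lp_norm (ereal P) y" for k using abs_le_lp_norm[OF _ assms(3)] assms by simp
    hence b: "bdd_above (range (\<lambda>k. \<bar>y k\<bar>))" by (auto simp: bdd_above_def)
    have "(SUP k. \<bar>y k\<bar>) \<le> lp_norm (ereal P) y" by (rule cSUP_least) (use bd in auto)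
    thus ?thesis using b 2 by (simp add: lp_infinite_exponent)
  qed
qed

text \<open>For \<open>r = \<infinity>\<close> the exponent \<open>P / real_of_ereal r\<close> is \<open>P / 0 = 0\<close>, so the bound reads
  \<open>lp_norm \<infinity> y \<le> M\<close> (and \<open>0\<close> when \<open>y = 0\<close>, since \<open>0 powr 0 = 0\<close>).\<close>

lemma lp_norm_interpolation:
  assumes "0 < P" "ereal P < r" "lp_mem (ereal P) y" "\<And>k. \<bar>y k\<bar> \<le> M"
  shows "lp_mem r y \<and>
    lp_norm r y \<le> M powr (1 - P / real_of_ereal r) * lp_norm (ereal P) y powr (P / real_of_ereal r)"
proof (cases r)
  case (real R)
  have PR: "P < R" using assms real by simp
  have M0: "0 \<le> M" using assms(4)[of 0] by simp
  from suminf_powr_le[OF assms(1) _ assms(3,4), of R] PR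
  have e: "summable (\<lambda>k. \<bar>y k\<bar> powr R)"
    "(\<Sum>k. \<bar>y k\<bar> powr R) \<le> M powr (R - P) * (\<Sum>k. \<bar>y k\<bar> powr P)" by auto
  have S0: "0 \<le> (\<Sum>k. \<bar>y k\<bar> powr P)"
    using assms(3) by (auto simp: lp_finite_exponent intro: suminf_nonneg)
  have "(\<Sum>k. \<bar>y k\<bar> powr R) powr (1/R) \<le> (M powr (R - P) * (\<Sum>k. \<bar>y k\<bar> powr P)) powr (1/R)"
    using PR assms(1) by (intro powr_mono2 e) (auto intro: suminf_nonneg e(1))
  also have "\<dots> = M powr ((R - P)/R) * (\<Sum>k. \<bar>y k\<bar> powr P) powr (1/R)"
    using M0 S0 by (simp add: powr_mult powr_powr)
  also have "(\<Sum>k. \<bar>y k\<bar> powr P) powr (1/R) = ((\<Sum>k. \<bar>y k\<bar> powr P) powr (1/P)) powr (P/R)"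
    using assms(1) by (simp add: powr_powr)
  also have "(R - P)/R = 1 - P/R" using PR assms(1) by (simp add: field_simps)
  finally show ?thesis using e real by (simp add: lp_finite_exponent)
next
  case PInf
  have inc: "lp_mem \<infinity> y" "lp_norm \<infinity> y \<le> lp_norm (ereal P) y"
    using lp_norm_mono_exponent[OF assms(1) _ assms(3), of \<infinity>] by auto
  have "lp_norm \<infinity> y \<le> M"
    using inc(1) assms(4) by (auto simp: lp_infinite_exponent intro: cSUP_least)
  moreover have "0 \<le> lp_norm \<infinity> y" by (rule lp_norm_nonneg[OF _ inc(1)]) simp
  ultimately have "lp_norm \<infinity> y \<le> M * lp_norm (ereal P) y powr 0"
    using inc(2) by (cases "lp_norm (ereal P) y = 0") auto
  thus ?thesis using PInf inc(1) assms(4)[of 0] by simp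
next
  case MInf
  thus ?thesis using assms(2) by simp
qed

lemma lp_mem_imp_c0:
  assumes "0 < P" "lp_mem (ereal P) y"
  shows "c0 y"
  unfolding c0_def
proof (intro allI impI)
  fix e :: real assume "0 < e"
  have "(\<lambda>k. \<bar>y k\<bar> powr P) \<longlonglongrightarrow> 0"
    using assms by (intro summable_LIMSEQ_zero) (simp add: lp_finite_exponent)
  moreover have "0 < e powr P" using \<open>0 < e\<close> by simp
  ultimately obtain N where N: "\<And>k. k \<ge> N \<Longrightarrow> \<bar>y k\<bar> powr P < e powr P"
    unfolding LIMSEQ_iff by (metis abs_of_nonneg diff_zero powr_ge_zero real_norm_def)
  have "{k. e \<le> \<bar>y k\<bar>} \<subseteq> {..<N}"
  proof
    fix k assume "k \<in> {k. e \<le> \<bar>y k\<bar>}"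
    hence "e powr P \<le> \<bar>y k\<bar> powr P" using assms \<open>0 < e\<close> by (auto intro: powr_mono2)
    thus "k \<in> {..<N}" using N[of k] by (cases "k \<ge> N") auto
  qed
  thus "finite {k. e \<le> \<bar>y k\<bar>}" by (rule finite_subset) auto
qed

lemma lp_mem_finite_support:
  assumes "0 < p" "\<And>k. k \<ge> K \<Longrightarrow> y k = 0"
  shows "lp_mem p y"
  using assms(1)
proof (cases rule: ereal_pos_cases)
  case (1 P)
  have "summable (\<lambda>k. \<bar>y k\<bar> powr P)"
    by (rule sums_summable[OF sums_finite[of "{..<K}"]]) (use assms in auto)
  thus ?thesis using 1 by (simp add: lp_finite_exponent)
next
  case 2
  have "\<bar>y k\<bar> \<le> Max ((\<lambda>k. \<bar>y k\<bar>) ` {..K})" for k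
  proof (cases "k \<le> K")
    case True thus ?thesis by (intro Max_ge) auto
  next
    case False
    have "\<bar>y K\<bar> \<le> Max ((\<lambda>k. \<bar>y k\<bar>) ` {..K})" by (intro Max_ge) auto
    moreover have "y k = 0" using assms(2)[of k] False by simp
    ultimately show ?thesis using abs_ge_zero[of "y K"] by linarith
  qed
  thus ?thesis using 2 by (auto simp: lp_infinite_exponent bdd_above_def)
qed

lemma lp_mem_geometric:
  assumes "0 < p" "0 < d"
  shows "lp_mem p (\<lambda>j. 2 powr (- (real j * d)))"
  using assms(1)
proof (cases rule: ereal_pos_cases)
  case (1 P)
  have eq: "\<bar>2 powr (- (real j * d))\<bar> powr P = (2 powr (- d * P)) ^ j" for j
    by (simp add: powr_powr flip: powr_realpow) (simp add: algebra_simps)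
  have "2 powr (- d * P) < 1" using assms 1 by (simp add: powr_less_one)
  hence "summable (\<lambda>j. (2 powr (- d * P)) ^ j)" by (intro summable_geometric) simp
  hence "summable (\<lambda>j. \<bar>2 powr (- (real j * d))\<bar> powr P)" by (simp only: eq)
  thus ?thesis using 1 by (simp add: lp_finite_exponent)
next
  case 2
  have "\<bar>2 powr (- (real j * d))\<bar> \<le> 1" for j
    using powr_mono[of "- (real j * d)" 0 2] assms by simp
  thus ?thesis using 2 by (auto simp: lp_infinite_exponent bdd_above_def)
qed



lemma sum_powr_le_lp_norm:
  assumes "0 < P" "lp_mem (ereal P) y" "finite K"
  shows "(\<Sum>k\<in>K. \<bar>y k\<bar> powr P) \<le> lp_norm (ereal P) y powr P"
proof -
  have s: "summable (\<lambda>k. \<bar>y k\<bar> powr P)" using assms by (simp add: lp_finite_exponent)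
  have S0: "0 \<le> (\<Sum>k. \<bar>y k\<bar> powr P)" by (rule suminf_nonneg[OF s]) simp
  have "(\<Sum>k\<in>K. \<bar>y k\<bar> powr P) \<le> (\<Sum>k. \<bar>y k\<bar> powr P)"
    by (rule sum_le_suminf[OF s assms(3)]) simp
  also have "\<dots> = lp_norm (ereal P) y powr P" by (simp add: lp_finite_exponent powr_inverse_powr[OF S0 assms(1)])
  finally show ?thesis .
qed
lemma lp_norm_powr_le:
  assumes "0 < Q" "lp_mem (ereal Q) a" "\<And>j. 0 \<le> a j" "0 < L" "L \<le> 1"
    and "r = \<infinity> \<or> (\<exists>R. r = ereal R \<and> Q \<le> L * R)"
  shows "lp_mem r (\<lambda>j. a j powr L) \<and> lp_norm r (\<lambda>j. a j powr L) \<le> lp_norm (ereal Q) a powr L"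
  using assms(6)
proof
  assume r: "r = \<infinity>"
  have "a j powr L \<le> lp_norm (ereal Q) a powr L" for j
    using abs_le_lp_norm[OF _ assms(2), of j] assms by (intro powr_mono2) auto
  hence b: "\<bar>a j powr L\<bar> \<le> lp_norm (ereal Q) a powr L" for j by simp
  hence "bdd_above (range (\<lambda>j. \<bar>a j powr L\<bar>))" by (auto simp: bdd_above_def)
  moreover have "(SUP j. \<bar>a j powr L\<bar>) \<le> lp_norm (ereal Q) a powr L" by (rule cSUP_least) (use b in auto)
  ultimately show ?thesis using r by (simp add: lp_infinite_exponent)
next
  assume "\<exists>R. r = ereal R \<and> Q \<le> L * R"
  then obtain R where R: "r = ereal R" "Q \<le> L * R" by blast
  have R0: "0 < R" using R assms by (metis mult_pos_pos not_less order_less_le_trans zero_less_mult_pos)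
  have inc: "lp_mem (ereal (L * R)) a \<and> lp_norm (ereal (L * R)) a \<le> lp_norm (ereal Q) a"
    by (rule lp_norm_mono_exponent[OF assms(1) _ assms(2)]) (use R in simp)
  have eq: "\<bar>a j powr L\<bar> powr R = \<bar>a j\<bar> powr (L * R)" for j
    using assms(3)[of j] by (simp add: powr_powr)
  have eqf: "(\<lambda>j. \<bar>a j powr L\<bar> powr R) = (\<lambda>j. \<bar>a j\<bar> powr (L * R))" using eq by auto
  have s: "summable (\<lambda>j. \<bar>a j\<bar> powr (L * R))" using inc by (simp add: lp_finite_exponent)
  have S0: "0 \<le> (\<Sum>j. \<bar>a j\<bar> powr (L * R))" by (rule suminf_nonneg[OF s]) simp
  have "lp_norm r (\<lambda>j. a j powr L) = (\<Sum>j. \<bar>a j\<bar> powr (L * R)) powr (1 / R)"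
    unfolding R(1) lp_finite_exponent eqf ..
  also have "\<dots> = ((\<Sum>j. \<bar>a j\<bar> powr (L * R)) powr (1 / (L * R))) powr L"
    using assms(4) by (simp add: powr_powr)
  also have "\<dots> \<le> lp_norm (ereal Q) a powr L"
    using inc assms(4) S0 by (intro powr_mono2) (auto simp: lp_finite_exponent)
  moreover have "lp_mem r (\<lambda>j. a j powr L)" unfolding R(1) lp_finite_exponent eqf by (rule s)
  ultimately show ?thesis by simp
qed

section \<open>Peaking elements of finite-dimensional spaces of \<open>c\<^sub>0\<close> functions\<close>

lemma exists_nontrivial_solution:
  fixes v :: "'l \<Rightarrow> 'i \<Rightarrow> real"
  assumes "finite S" "finite L" "card S < card L"
  shows "\<exists>d. (\<exists>l\<in>L. d l \<noteq> 0) \<and> (\<forall>i\<in>S. (\<Sum>l\<in>L. d l * v l i) = 0)"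
  using assms
proof (induction S arbitrary: L v rule: finite_induct)
  case empty
  then obtain l where "l \<in> L" by fastforce
  then show ?case by (intro exI[of _ "\<lambda>_. 1"]) auto
next
  case (insert a S)
  have cS: "card (insert a S) = Suc (card S)" using insert by simp
  show ?case
  proof (cases "\<forall>l\<in>L. v l a = 0")
    case True
    have "card S < card L" using insert cS by simp
    from insert.IH[OF insert.prems(1) this] obtain d where
      d: "\<exists>l\<in>L. d l \<noteq> 0" "\<forall>i\<in>S. (\<Sum>l\<in>L. d l * v l i) = 0" by blast
    show ?thesis using d True by (intro exI[of _ d]) auto
  next
    case False
    then obtain l0 where l0: "l0 \<in> L" "v l0 a \<noteq> 0" by auto
    \<comment> \<open>Gaussian elimination of the unknown \<open>d l0\<close> using the equation at \<open>a\<close>.\<close>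
    define L' where "L' = L - {l0}"
    define v' where "v' = (\<lambda>l i. v l i - (v l a / v l0 a) * v l0 i)"
    have "card L' = card L - 1" using l0 insert by (simp add: L'_def)
    hence "card S < card L'" using insert cS by simp
    from insert.IH[OF _ this, of v'] obtain d' where
      d': "\<exists>l\<in>L'. d' l \<noteq> 0" "\<forall>i\<in>S. (\<Sum>l\<in>L'. d' l * v' l i) = 0"
      using insert.prems(1) by (auto simp: L'_def)
    define d where "d = (\<lambda>l. if l = l0 then - (\<Sum>l\<in>L'. d' l * v l a) / v l0 a else d' l)"
    have key: "(\<Sum>l\<in>L. d l * v l i) = (\<Sum>l\<in>L'. d' l * v' l i)" for i
    proof -
      have "(\<Sum>l\<in>L. d l * v l i) = d l0 * v l0 i + (\<Sum>l\<in>L'. d l * v l i)"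
        using sum.remove[OF insert.prems(1) l0(1)] by (simp add: L'_def)
      also have "(\<Sum>l\<in>L'. d l * v l i) = (\<Sum>l\<in>L'. d' l * v l i)"
        by (rule sum.cong) (auto simp: d_def L'_def)
      moreover have "(\<Sum>l\<in>L'. d' l * (v l a / v l0 a * v l0 i))
          = (\<Sum>l\<in>L'. d' l * v l a) * (v l0 i / v l0 a)"
        unfolding sum_distrib_right by (rule sum.cong) (auto simp: field_simps l0(2))
      ultimately show ?thesis
        by (simp add: d_def v'_def right_diff_distrib sum_subtractf field_simps)
    qed
    show ?thesis
    proof (intro exI[of _ d] conjI)
      show "\<exists>l\<in>L. d l \<noteq> 0" using d'(1) by (auto simp: d_def L'_def)
      show "\<forall>i\<in>insert a S. (\<Sum>l\<in>L. d l * v l i) = 0"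
        using d'(2) l0(2) by (auto simp: key v'_def)
    qed
  qed
qed

text \<open>Move from \<open>w\<close> in direction \<open>g\<close> as far as the unit ball allows.  If no new point of
  modulus one appeared off \<open>S\<close>, the \<open>c\<^sub>0\<close> function reached there would stay below some
  \<open>\<mu> < 1\<close> off \<open>S\<close>, and one could move further.\<close>

lemma c0_exists_new_peak:
  fixes w g :: "'i \<Rightarrow> real"
  assumes "c0 w" "c0 g" "\<And>i. \<bar>w i\<bar> \<le> 1" "g i1 \<noteq> 0" "\<And>i. i \<in> S \<Longrightarrow> g i = 0"
  shows "\<exists>e. (\<forall>i. \<bar>w i + e * g i\<bar> \<le> 1) \<and> (\<exists>i0. i0 \<notin> S \<and> \<bar>w i0 + e * g i0\<bar> = 1)"
proof -
  obtain D where D: "0 < D" "\<And>i. \<bar>g i\<bar> \<le> D" using c0_bounded[OF assms(2)] by blast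
  define E where "E = {e::real. 0 \<le> e \<and> (\<forall>i. \<bar>w i + e * g i\<bar> \<le> 1)}"
  have E0: "0 \<in> E" using assms(3) by (simp add: E_def)
  have Ebd: "bdd_above E"
  proof (rule bdd_aboveI)
    fix e assume "e \<in> E"
    hence e: "0 \<le> e" "\<bar>w i1 + e * g i1\<bar> \<le> 1" by (auto simp: E_def)
    hence "\<bar>e * g i1\<bar> \<le> 2" using assms(3)[of i1] by linarith
    hence "e * \<bar>g i1\<bar> \<le> 2" using e by (simp add: abs_mult)
    thus "e \<le> 2 / \<bar>g i1\<bar>" using assms(4) by (simp add: field_simps)
  qed
  have "closed E" unfolding E_def
    by (intro closed_Collect_conj closed_Collect_all closed_Collect_le continuous_intros)
  hence esE: "Sup E \<in> E" using E0 Ebd by (intro closed_contains_Sup) auto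
  define ws where "ws = (\<lambda>i. w i + Sup E * g i)"
  have ws1: "\<bar>ws i\<bar> \<le> 1" for i using esE by (simp add: E_def ws_def)
  have "\<exists>i0. i0 \<notin> S \<and> \<bar>ws i0\<bar> = 1"
  proof (rule ccontr)
    assume "\<not> ?thesis"
    hence "\<And>i. i \<in> -S \<Longrightarrow> \<bar>ws i\<bar> < 1" using ws1 by (meson ComplD order_le_imp_less_or_eq)
    moreover have "c0 ws" unfolding ws_def by (intro c0_add c0_scale assms(1,2))
    ultimately obtain \<mu> where \<mu>: "\<mu> < 1" "\<And>i. i \<notin> S \<Longrightarrow> \<bar>ws i\<bar> \<le> \<mu>"
      using c0_bounded_below_one by (metis ComplI)
    define \<delta> where "\<delta> = (1 - \<mu>) / D"
    have \<delta>0: "0 < \<delta>" using \<mu> D by (simp add: \<delta>_def)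
    have "\<bar>w i + (Sup E + \<delta>) * g i\<bar> \<le> 1" for i
    proof (cases "i \<in> S")
      case True
      thus ?thesis using ws1[of i] assms(5) by (simp add: ws_def)
    next
      case False
      have "\<bar>w i + (Sup E + \<delta>) * g i\<bar> \<le> \<bar>ws i\<bar> + \<delta> * \<bar>g i\<bar>"
        using \<delta>0 abs_triangle_ineq[of "ws i" "\<delta> * g i"] by (simp add: ws_def algebra_simps abs_mult)
      also have "\<dots> \<le> \<mu> + \<delta> * D"
        using \<mu>(2)[OF False] D(2)[of i] \<delta>0 by (intro add_mono mult_left_mono) auto
      also have "\<dots> = 1" using D by (simp add: \<delta>_def)
      finally show ?thesis .
    qed
    hence "Sup E + \<delta> \<in> E" using esE \<delta>0 by (simp add: E_def)
    hence "Sup E + \<delta> \<le> Sup E" using Ebd by (intro cSup_upper)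
    thus False using \<delta>0 by simp
  qed
  thus ?thesis using ws1 unfolding ws_def by blast
qed

lemma exists_peaking_combination:
  fixes v :: "nat \<Rightarrow> 'i \<Rightarrow> real"
  assumes indep: "\<And>c. (\<forall>i. (\<Sum>l<n. c l * v l i) = 0) \<Longrightarrow> \<forall>l<n. c l = 0"
    and c0: "\<And>l. l < n \<Longrightarrow> c0 (v l)"
  shows "\<exists>c S. (\<forall>i. \<bar>\<Sum>l<n. c l * v l i\<bar> \<le> 1) \<and> finite S \<and> card S = n
     \<and> (\<forall>i\<in>S. \<bar>\<Sum>l<n. c l * v l i\<bar> = 1)"
proof -
  have "\<exists>c S. (\<forall>i. \<bar>\<Sum>l<n. c l * v l i\<bar> \<le> 1) \<and> finite S \<and> card S = m
     \<and> (\<forall>i\<in>S. \<bar>\<Sum>l<n. c l * v l i\<bar> = 1)" if "m \<le> n" for m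
    using that
  proof (induction m)
    case 0 show ?case by (intro exI[of _ "\<lambda>_. 0"] exI[of _ "{}"]) auto
  next
    case (Suc m)
    then obtain c S where c: "\<forall>i. \<bar>\<Sum>l<n. c l * v l i\<bar> \<le> 1" and S: "finite S" "card S = m"
      "\<forall>i\<in>S. \<bar>\<Sum>l<n. c l * v l i\<bar> = 1" by auto
    obtain d where d: "\<exists>l\<in>{..<n}. d l \<noteq> 0" "\<forall>i\<in>S. (\<Sum>l<n. d l * v l i) = 0"
      using exists_nontrivial_solution[OF S(1), of "{..<n}" v] S Suc.prems by auto
    obtain i1 where "(\<Sum>l<n. d l * v l i1) \<noteq> 0" using indep[of d] d(1) by auto
    then obtain e i0 where e: "\<forall>i. \<bar>(\<Sum>l<n. c l * v l i) + e * (\<Sum>l<n. d l * v l i)\<bar> \<le> 1"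
      and i0: "i0 \<notin> S" "\<bar>(\<Sum>l<n. c l * v l i0) + e * (\<Sum>l<n. d l * v l i0)\<bar> = 1"
      using c0_exists_new_peak[of "\<lambda>i. \<Sum>l<n. c l * v l i" "\<lambda>i. \<Sum>l<n. d l * v l i" i1 S]
        c0_sum[of "{..<n}" v] c0 c d(2) by auto
    have comb: "(\<Sum>l<n. (c l + e * d l) * v l i) = (\<Sum>l<n. c l * v l i) + e * (\<Sum>l<n. d l * v l i)"
      for i by (simp add: algebra_simps sum.distrib sum_distrib_left)
    show ?case
      by (intro exI[of _ "\<lambda>l. c l + e * d l"] exI[of _ "insert i0 S"])
        (use e i0 S d(2) in \<open>auto simp: comb\<close>)
  qed
  thus ?thesis by blast
qed

section \<open>The mixed spaces and the embedding\<close>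

definition block_norms :: "real \<Rightarrow> ereal \<Rightarrow> dseq \<Rightarrow> nat \<Rightarrow> real" where
  "block_norms s p x = (\<lambda>j. 2 powr (real j * s) * lp_norm p (x j))"

lemma mixed_mem_iff: "mixed_mem q s p x \<longleftrightarrow> (\<forall>j. lp_mem p (x j)) \<and> lp_mem q (block_norms s p x)"
  by (simp add: mixed_mem_def block_norms_def)

lemma mixed_norm_eq: "mixed_norm q s p x = lp_norm q (block_norms s p x)"
  by (simp add: mixed_norm_def block_norms_def)

lemma block_norms_nonneg: "0 < p \<Longrightarrow> mixed_mem q s p x \<Longrightarrow> 0 \<le> block_norms s p x j"
  by (simp add: block_norms_def mixed_mem_iff lp_norm_nonneg)

lemma mixed_norm_nonneg: "0 < q \<Longrightarrow> mixed_mem q s p x \<Longrightarrow> 0 \<le> mixed_norm q s p x"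
  by (simp add: mixed_norm_eq mixed_mem_iff lp_norm_nonneg)

lemma block_norm_le_mixed_norm:
  assumes "0 < q" "0 < p" "mixed_mem q s p x"
  shows "block_norms s p x j \<le> mixed_norm q s p x"
  using abs_le_lp_norm[OF assms(1), of "block_norms s p x" j] block_norms_nonneg[OF assms(2,3), of j] assms(3)
  by (simp add: mixed_norm_eq mixed_mem_iff)

lemma lp_norm_block_le:
  assumes "0 < q" "0 < p" "mixed_mem q s p x"
  shows "lp_norm p (x j) \<le> 2 powr (- (real j * s)) * mixed_norm q s p x"
proof -
  have "lp_norm p (x j) = 2 powr (- (real j * s)) * block_norms s p x j"
    by (simp add: block_norms_def mult.assoc[symmetric] flip: powr_add)
  also have "\<dots> \<le> 2 powr (- (real j * s)) * mixed_norm q s p x"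
    using block_norm_le_mixed_norm[OF assms] by (intro mult_left_mono) auto
  finally show ?thesis .
qed

lemma abs_entry_le_lp_norm_block: "0 < p \<Longrightarrow> mixed_mem q s p x \<Longrightarrow> \<bar>x j k\<bar> \<le> lp_norm p (x j)"
  by (simp add: mixed_mem_iff abs_le_lp_norm)

lemma mixed_scale:
  assumes "0 < q" "0 < p" "mixed_mem q s p x"
  shows "mixed_mem q s p (\<lambda>j k. c * x j k) \<and> mixed_norm q s p (\<lambda>j k. c * x j k) = \<bar>c\<bar> * mixed_norm q s p x"
proof -
  have blocks: "lp_mem p (\<lambda>k. c * x j k) \<and> lp_norm p (\<lambda>k. c * x j k) = \<bar>c\<bar> * lp_norm p (x j)" for j
    using lp_scale[OF assms(2)] assms(3) by (auto simp: mixed_mem_iff)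
  hence "block_norms s p (\<lambda>j k. c * x j k) = (\<lambda>j. \<bar>c\<bar> * block_norms s p x j)"
    by (auto simp: block_norms_def algebra_simps)
  thus ?thesis using blocks lp_scale[OF assms(1), of "block_norms s p x" "\<bar>c\<bar>"] assms(3)
    by (simp add: mixed_mem_iff mixed_norm_eq)
qed

lemma mixed_space_embedding:
  assumes "t \<le> s" "0 < p0" "p0 < p1" "0 < q0" "0 < q1" "t < s \<or> q0 < q1"
  shows "mixed_space q0 s p0 \<subseteq> mixed_space q1 t p1"
proof
  fix x assume "x \<in> mixed_space q0 s p0"
  hence x: "mixed_mem q0 s p0 x" by (simp add: mixed_space_def)
  obtain P0 where P0: "p0 = ereal P0" "0 < P0" using assms(2,3) by (cases p0) auto
  have blocks: "lp_mem p1 (x j) \<and> lp_norm p1 (x j) \<le> lp_norm p0 (x j)" for j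
    using lp_norm_mono_exponent[of P0 p1 "x j"] P0 assms(3) x by (auto simp: mixed_mem_iff)
  have b_le: "\<bar>block_norms t p1 x j\<bar> \<le> 2 powr (- (real j * (s - t))) * block_norms s p0 x j" for j
  proof -
    have "0 \<le> lp_norm p1 (x j)" using blocks lp_norm_nonneg[of p1] assms(2,3) by force
    hence "\<bar>block_norms t p1 x j\<bar> \<le> 2 powr (real j * t) * lp_norm p0 (x j)"
      using blocks by (simp add: block_norms_def)
    thus ?thesis by (simp add: block_norms_def mult.assoc[symmetric] algebra_simps flip: powr_add)
  qed
  have "lp_mem q1 (block_norms t p1 x)"
    using assms(6)
  proof
    assume "t < s"
    have "lp_mem q1 (\<lambda>j. mixed_norm q0 s p0 x * 2 powr (- (real j * (s - t))))"
      using lp_scale[OF assms(5) lp_mem_geometric[OF assms(5), of "s - t"]] \<open>t < s\<close> by auto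
    moreover have "\<bar>block_norms t p1 x j\<bar> \<le> \<bar>mixed_norm q0 s p0 x * 2 powr (- (real j * (s - t)))\<bar>" for j
    proof -
      have "2 powr (- (real j * (s - t))) * block_norms s p0 x j
          \<le> 2 powr (- (real j * (s - t))) * mixed_norm q0 s p0 x"
        using block_norm_le_mixed_norm[OF assms(4,2) x, of j] by (intro mult_left_mono) auto
      with b_le[of j] have "\<bar>block_norms t p1 x j\<bar> \<le> 2 powr (- (real j * (s - t))) * mixed_norm q0 s p0 x"
        by (rule order_trans)
      thus ?thesis using mixed_norm_nonneg[OF assms(4) x] by (simp add: mult.commute)
    qed
    ultimately show ?thesis using lp_mono[OF assms(5)] by blast
  next
    assume "q0 < q1"
    obtain Q0 where Q0: "q0 = ereal Q0" "0 < Q0" using assms(4) \<open>q0 < q1\<close> by (cases q0) auto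
    have "lp_mem q1 (block_norms s p0 x)"
      using lp_norm_mono_exponent[of Q0 q1] x Q0 \<open>q0 < q1\<close> by (auto simp: mixed_mem_iff)
    moreover have "\<bar>block_norms t p1 x j\<bar> \<le> \<bar>block_norms s p0 x j\<bar>" for j
    proof -
      have "2 powr (- (real j * (s - t))) \<le> 1" using powr_mono[of "- (real j * (s - t))" 0 2] assms(1) by simp
      hence "2 powr (- (real j * (s - t))) * block_norms s p0 x j \<le> block_norms s p0 x j"
        using block_norms_nonneg[OF assms(2) x, of j] by (simp add: mult_left_le_one_le)
      thus ?thesis using b_le[of j] block_norms_nonneg[OF assms(2) x, of j] by simp
    qed
    ultimately show ?thesis using lp_mono[OF assms(5)] by blast
  qed
  thus "x \<in> mixed_space q1 t p1" using blocks by (simp add: mixed_space_def mixed_mem_iff)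
qed

section \<open>Bernstein numbers\<close>

lemma lin_comb_mem:
  assumes "lin_subspace M" "\<And>i. i < n \<Longrightarrow> v i \<in> M"
  shows "lin_comb n d v \<in> M"
  using assms(2)
proof (induction n)
  case 0 thus ?case using assms(1) by (simp add: lin_comb_def lin_subspace_def)
next
  case (Suc n)
  have "lin_comb (Suc n) d v = (\<lambda>j k. lin_comb n d v j k + d n * v n j k)"
    by (simp add: lin_comb_def)
  thus ?case using Suc assms(1) by (simp add: lin_subspace_def)
qed

lemma subspace_dim_scale:
  assumes "subspace_dim X n V" "x \<in> V"
  shows "(\<lambda>j k. c * x j k) \<in> V"
proof -
  obtain v d where V: "V = {lin_comb n c v | c. True}" and x: "x = lin_comb n d v"
    using assms by (auto simp: subspace_dim_def)
  have "(\<lambda>j k. c * x j k) = lin_comb n (\<lambda>l. c * d l) v"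
    by (simp add: x lin_comb_def sum_distrib_left mult.assoc)
  thus ?thesis using V by auto
qed

lemma bernstein_nonneg:
  assumes "subspace_dim X n V" "\<And>x. x \<in> V \<Longrightarrow> 0 \<le> nY (T x)"
  shows "0 \<le> bernstein X nX nY T n"
proof -
  have "0 \<le> (INF x\<in>{x \<in> V. nX x = 1}. ereal (nY (T x)))"
    using assms(2) by (auto intro: INF_greatest)
  also have "\<dots> \<le> bernstein X nX nY T n"
    unfolding bernstein_def by (rule SUP_upper) (use assms(1) in simp)
  finally show ?thesis .
qed

lemma bernstein_le:
  assumes "\<And>V. subspace_dim X n V \<Longrightarrow> \<exists>x\<in>V. nX x = 1 \<and> nY (T x) \<le> \<epsilon>"
  shows "bernstein X nX nY T n \<le> ereal \<epsilon>"
  unfolding bernstein_def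
proof (rule SUP_least)
  fix V assume "V \<in> {V. subspace_dim X n V}"
  then obtain x where "x \<in> V" "nX x = 1" "nY (T x) \<le> \<epsilon>" using assms by blast
  hence "(INF x\<in>{x \<in> V. nX x = 1}. ereal (nY (T x))) \<le> ereal (nY (T x))"
    by (intro INF_lower) auto
  also have "\<dots> \<le> ereal \<epsilon>" using \<open>nY (T x) \<le> \<epsilon>\<close> by simp
  finally show "(INF x\<in>{x \<in> V. nX x = 1}. ereal (nY (T x))) \<le> ereal \<epsilon>" .
qed

lemma ereal_LIMSEQ_zeroI:
  fixes f :: "nat \<Rightarrow> ereal"
  assumes "\<And>n. 0 \<le> f n" "\<And>\<epsilon>. 0 < \<epsilon> \<Longrightarrow> \<exists>N. \<forall>n\<ge>N. f n \<le> ereal \<epsilon>"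
  shows "f \<longlonglongrightarrow> 0"
proof (rule order_tendstoI)
  fix a :: ereal assume "a < 0"
  thus "eventually (\<lambda>n. a < f n) sequentially"
    using assms(1) by (auto intro: always_eventually order_less_le_trans)
next
  fix a :: ereal assume "0 < a"
  then obtain z where z: "0 < ereal z" "ereal z < a" using ereal_dense2 by blast
  then obtain N where "\<forall>n\<ge>N. f n \<le> ereal z" using assms(2)[of z] by auto
  thus "eventually (\<lambda>n. f n < a) sequentially"
    unfolding eventually_sequentially using z(2) by (meson order_le_less_trans)
qed

lemma fin_strictly_singular_imp_strictly_singular:
  assumes "fin_strictly_singular X nX nY T"
  shows "strictly_singular X nX nY T"
  unfolding strictly_singular_def
proof
  assume "\<exists>M. inf_dim_subspace X M \<and>
    (\<exists>c C. 0 < c \<and> 0 < C \<and> (\<forall>x\<in>M. c * nX x \<le> nY (T x) \<and> nY (T x) \<le> C * nX x))"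
  then obtain M c where M: "inf_dim_subspace X M" and "0 < c"
    and below: "\<And>x. x \<in> M \<Longrightarrow> c * nX x \<le> nY (T x)" by blast
  have "eventually (\<lambda>n. bernstein X nX nY T n < ereal c) sequentially"
    using assms \<open>0 < c\<close> unfolding fin_strictly_singular_def by (intro order_tendstoD(2)) auto
  then obtain N where N: "bernstein X nX nY T N < ereal c" by (auto simp: eventually_sequentially)
  obtain v where v: "\<forall>i<N. v i \<in> M" "lin_indep N v" using M unfolding inf_dim_subspace_def by blast
  define V where "V = {lin_comb N d v | d. True}"
  have VM: "V \<subseteq> M" using lin_comb_mem[of M N v] M v(1) by (auto simp: V_def inf_dim_subspace_def)
  have "subspace_dim X N V"
    using VM M v(2) by (auto simp: subspace_dim_def inf_dim_subspace_def V_def)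
  have "ereal c \<le> (INF x\<in>{x \<in> V. nX x = 1}. ereal (nY (T x)))"
    using VM below by (force intro: INF_greatest)
  also have "\<dots> \<le> bernstein X nX nY T N"
    unfolding bernstein_def by (rule SUP_upper) (use \<open>subspace_dim X N V\<close> in simp)
  finally show False using N by simp
qed

lemma exists_subspace_dim_mixed_space:
  assumes "0 < p" "0 < q"
  shows "\<exists>V. subspace_dim (mixed_space q s p) n V"
proof -
  define e where "e = (\<lambda>l::nat. \<lambda>(j::nat) (k::nat). if j = 0 \<and> k = l then (1::real) else 0)"
  have comb: "lin_comb n c e = (\<lambda>j k. if j = 0 \<and> k < n then c k else 0)" for c
    by (intro ext) (auto simp: lin_comb_def e_def if_distrib[of "(*) _"] cong: if_cong)
  have "lin_indep n e"
    unfolding lin_indep_def comb by (metis (mono_tags, lifting))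
  moreover have "lin_comb n c e \<in> mixed_space q s p" for c
  proof -
    let ?x = "lin_comb n c e"
    have "lp_mem p (?x j)" for j by (rule lp_mem_finite_support[OF assms(1), of n]) (simp add: comb)
    moreover have "lp_mem q (block_norms s p ?x)"
      by (rule lp_mem_finite_support[OF assms(2), of 1]) (simp add: comb block_norms_def lp_zero[OF assms(1)])
    ultimately show ?thesis by (simp add: mixed_space_def mixed_mem_iff)
  qed
  ultimately have "subspace_dim (mixed_space q s p) n {lin_comb n c e | c. True}"
    by (auto simp: subspace_dim_def)
  thus ?thesis ..
qed

section \<open>Peaks and the criterion for finite strict singularity\<close>

definition peak_bounded :: "real \<Rightarrow> dseq \<Rightarrow> bool" where
  "peak_bounded \<sigma> x \<longleftrightarrow> (\<forall>j k. \<bar>x j k\<bar> \<le> 2 powr (- (real j * \<sigma>)))"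

definition peaks :: "real \<Rightarrow> dseq \<Rightarrow> nat \<Rightarrow> bool" where
  "peaks \<sigma> x n \<longleftrightarrow> peak_bounded \<sigma> x \<and>
     (\<exists>S. finite S \<and> card S = n \<and> (\<forall>(j, k)\<in>S. \<bar>x j k\<bar> = 2 powr (- (real j * \<sigma>))))"

lemma abs_powr_mult_le_one_iff: "\<bar>2 powr a * (y::real)\<bar> \<le> 1 \<longleftrightarrow> \<bar>y\<bar> \<le> 2 powr (- a)"
  by (simp add: abs_mult powr_minus_divide field_simps)

lemma abs_powr_mult_eq_one_iff: "\<bar>2 powr a * (y::real)\<bar> = 1 \<longleftrightarrow> \<bar>y\<bar> = 2 powr (- a)"
  by (simp add: abs_mult powr_minus_divide field_simps)

lemma subspace_dim_exists_peaks:
  assumes V: "subspace_dim X n V"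
    and c0: "\<And>x. x \<in> V \<Longrightarrow> c0 (\<lambda>(j, k). 2 powr (real j * \<sigma>) * x j k)"
  shows "\<exists>x\<in>V. peaks \<sigma> x n"
proof -
  obtain v where indep: "lin_indep n v" and V_eq: "V = {lin_comb n c v | c. True}"
    using V by (auto simp: subspace_dim_def)
  define u where "u = (\<lambda>l (j, k). 2 powr (real j * \<sigma>) * v l j k)"
  have u_comb: "(\<Sum>l<n. c l * u l (j, k)) = 2 powr (real j * \<sigma>) * lin_comb n c v j k" for c j k
    by (simp add: u_def lin_comb_def sum_distrib_left mult.left_commute)
  have "\<forall>l<n. c l = 0" if "\<forall>i. (\<Sum>l<n. c l * u l i) = 0" for c
  proof -
    have "lin_comb n c v j k = 0" for j k
      using that u_comb[of c j k] by simp
    hence "lin_comb n c v = (\<lambda>j k. 0)" by (intro ext)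
    thus ?thesis using indep by (simp add: lin_indep_def)
  qed
  moreover have "c0 (u l)" if "l < n" for l
  proof -
    have "lin_comb n (\<lambda>i. if i = l then 1 else 0) v = v l"
      using that by (intro ext) (simp add: lin_comb_def if_distrib[of "\<lambda>a. a * _"] cong: if_cong)
    hence "v l \<in> V" unfolding V_eq by (metis (mono_tags, lifting) mem_Collect_eq)
    thus ?thesis using c0 by (simp add: u_def)
  qed
  ultimately obtain c S where c: "\<forall>i. \<bar>\<Sum>l<n. c l * u l i\<bar> \<le> 1" "finite S" "card S = n"
      "\<forall>i\<in>S. \<bar>\<Sum>l<n. c l * u l i\<bar> = 1"
    using exists_peaking_combination[where n=n and v=u] by blast
  have "\<bar>lin_comb n c v j k\<bar> \<le> 2 powr (- (real j * \<sigma>))" for j k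
    using c(1)[rule_format, of "(j, k)"] by (simp add: u_comb abs_powr_mult_le_one_iff)
  moreover have "\<bar>lin_comb n c v j k\<bar> = 2 powr (- (real j * \<sigma>))" if "(j, k) \<in> S" for j k
    using c(4)[rule_format, OF that] by (simp add: u_comb abs_powr_mult_eq_one_iff)
  ultimately have "peaks \<sigma> (lin_comb n c v) n"
    unfolding peaks_def peak_bounded_def using c(2,3) by blast
  thus ?thesis using V_eq by auto
qed

lemma powr_sublinear_le:
  fixes C L \<epsilon> X Y :: real
  assumes "0 < C" "L < 1" "0 < \<epsilon>" "(C / \<epsilon>) powr (1 / (1 - L)) \<le> X" "0 < X" "Y \<le> C * X powr L"
  shows "Y \<le> \<epsilon> * X"
proof -
  have B0: "0 < (C / \<epsilon>) powr (1 / (1 - L))" using assms(1,3) by simp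
  have "X powr (L - 1) \<le> ((C / \<epsilon>) powr (1 / (1 - L))) powr (L - 1)"
    using assms(2,4) B0 by (intro powr_mono2') auto
  also have "\<dots> = (C / \<epsilon>) powr (1 / (1 - L) * (L - 1))" by (simp add: powr_powr)
  also have "1 / (1 - L) * (L - 1) = - 1" using assms(2) by (simp add: field_simps)
  also have "(C / \<epsilon>) powr (- 1) = \<epsilon> / C" using assms(1,3) by (simp add: powr_minus_divide)
  finally have "C * X powr (L - 1) * X \<le> \<epsilon> * X"
    using assms(1,5) by (simp add: field_simps)
  moreover have "X powr L = X powr (L - 1) * X" using powr_add[of X "L - 1" 1] assms(5) by simp
  ultimately show ?thesis using assms(6) by (simp add: mult.assoc)
qed

lemma bernstein_eventually_le:
  assumes pos: "0 < p0" "0 < q0" "0 < p1" "0 < q1"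
    and emb: "mixed_space q0 s p0 \<subseteq> mixed_space q1 t p1"
    and c0: "\<And>x. mixed_mem q0 s p0 x \<Longrightarrow> c0 (\<lambda>(j, k). 2 powr (real j * \<sigma>) * x j k)"
    and upper: "\<And>x. mixed_mem q0 s p0 x \<Longrightarrow> peak_bounded \<sigma> x \<Longrightarrow>
        mixed_norm q1 t p1 x \<le> C * mixed_norm q0 s p0 x powr L"
    and CL: "0 < C" "L < 1"
    and count: "\<And>x n. mixed_mem q0 s p0 x \<Longrightarrow> peaks \<sigma> x n \<Longrightarrow> 0 < n \<Longrightarrow>
        1 \<le> mixed_norm q0 s p0 x \<and> real n \<le> F (mixed_norm q0 s p0 x)"
    and F: "mono_on {1..} F"
    and \<epsilon>: "0 < \<epsilon>"
  shows "\<exists>N. \<forall>n\<ge>N. bernstein (mixed_space q0 s p0) (mixed_norm q0 s p0) (mixed_norm q1 t p1) id n \<le> ereal \<epsilon>"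
proof -
  define R where "R = max 1 ((C / \<epsilon>) powr (1 / (1 - L)))"
  define N where "N = nat \<lceil>F R\<rceil> + 1"
  have "bernstein (mixed_space q0 s p0) (mixed_norm q0 s p0) (mixed_norm q1 t p1) id n \<le> ereal \<epsilon>"
    if "N \<le> n" for n
  proof (rule bernstein_le)
    fix V assume V: "subspace_dim (mixed_space q0 s p0) n V"
    hence mem: "mixed_mem q0 s p0 x" if "x \<in> V" for x
      using that by (auto simp: subspace_dim_def mixed_space_def)
    obtain x where "x \<in> V" and pk: "peaks \<sigma> x n" using subspace_dim_exists_peaks[OF V] c0 mem by blast
    define X where "X = mixed_norm q0 s p0 x"
    have "0 < n" using \<open>N \<le> n\<close> by (simp add: N_def)
    hence X: "1 \<le> X" "real n \<le> F X" using count[OF mem[OF \<open>x \<in> V\<close>] pk] by (auto simp: X_def)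
    have "R < X"
    proof (rule ccontr)
      assume "\<not> R < X"
      hence "F X \<le> F R" using X(1) by (intro mono_onD[OF F]) (auto simp: R_def)
      moreover have "F R < real N" using real_nat_ceiling_ge[of "F R"] by (simp add: N_def)
      ultimately show False using X(2) \<open>N \<le> n\<close> by linarith
    qed
    hence "(C / \<epsilon>) powr (1 / (1 - L)) \<le> X" by (simp add: R_def)
    moreover have "mixed_norm q1 t p1 x \<le> C * X powr L"
      using upper[OF mem[OF \<open>x \<in> V\<close>]] pk by (simp add: peaks_def X_def)
    ultimately have small: "mixed_norm q1 t p1 x \<le> \<epsilon> * X"
      using powr_sublinear_le[OF CL \<epsilon>] X(1) by simp
    have x1: "mixed_mem q1 t p1 x" using emb mem[OF \<open>x \<in> V\<close>] by (auto simp: mixed_space_def)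
    moreover have "mixed_norm q0 s p0 (\<lambda>j k. (1 / X) * x j k) = 1"
      using mixed_scale[OF pos(2,1) mem[OF \<open>x \<in> V\<close>], of "1 / X"] X(1) by (simp add: X_def)
    moreover have "mixed_norm q1 t p1 (\<lambda>j k. (1 / X) * x j k) = mixed_norm q1 t p1 x / X"
      using mixed_scale[OF pos(4,3) x1, of "1 / X"] X(1) by simp
    ultimately show "\<exists>x\<in>V. mixed_norm q0 s p0 x = 1 \<and> mixed_norm q1 t p1 (id x) \<le> \<epsilon>"
      using small subspace_dim_scale[OF V \<open>x \<in> V\<close>, of "1 / X"] X(1)
      by (intro bexI[of _ "\<lambda>j k. (1 / X) * x j k"]) (simp_all add: divide_le_eq)
  qed
  thus ?thesis by blast
qed

lemma fin_strictly_singular_mixed_if_peaks: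
  assumes pos: "0 < p0" "0 < q0" "0 < p1" "0 < q1"
    and emb: "mixed_space q0 s p0 \<subseteq> mixed_space q1 t p1"
    and c0: "\<And>x. mixed_mem q0 s p0 x \<Longrightarrow> c0 (\<lambda>(j, k). 2 powr (real j * \<sigma>) * x j k)"
    and upper: "\<And>x. mixed_mem q0 s p0 x \<Longrightarrow> peak_bounded \<sigma> x \<Longrightarrow>
        mixed_norm q1 t p1 x \<le> C * mixed_norm q0 s p0 x powr L"
    and CL: "0 < C" "L < 1"
    and count: "\<And>x n. mixed_mem q0 s p0 x \<Longrightarrow> peaks \<sigma> x n \<Longrightarrow> 0 < n \<Longrightarrow>
        1 \<le> mixed_norm q0 s p0 x \<and> real n \<le> F (mixed_norm q0 s p0 x)"
    and F: "mono_on {1..} F"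
  shows "fin_strictly_singular (mixed_space q0 s p0) (mixed_norm q0 s p0) (mixed_norm q1 t p1) id"
  unfolding fin_strictly_singular_def
proof (rule ereal_LIMSEQ_zeroI)
  fix n
  obtain V where V: "subspace_dim (mixed_space q0 s p0) n V"
    using exists_subspace_dim_mixed_space[OF pos(1,2)] by blast
  have "0 \<le> mixed_norm q1 t p1 x" if "x \<in> V" for x
  proof -
    have "x \<in> mixed_space q1 t p1" using that V emb by (auto simp: subspace_dim_def)
    thus ?thesis using mixed_norm_nonneg[OF pos(4)] by (simp add: mixed_space_def)
  qed
  thus "0 \<le> bernstein (mixed_space q0 s p0) (mixed_norm q0 s p0) (mixed_norm q1 t p1) id n"
    using bernstein_nonneg[OF V] by simp
qed (rule bernstein_eventually_le[OF assms])

lemma card_mult_powr_le_lp_norm: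
  assumes "0 < P" "lp_mem (ereal P) y" "finite K" "\<And>k. k \<in> K \<Longrightarrow> \<bar>y k\<bar> = m"
  shows "real (card K) * m powr P \<le> lp_norm (ereal P) y powr P"
  using sum_powr_le_lp_norm[OF assms(1-3)] assms(4) by simp

lemma card_le_card_fst_mult:
  fixes S :: "('a \<times> 'b) set"
  assumes "finite S" "\<And>j. j \<in> fst ` S \<Longrightarrow> real (card {k. (j, k) \<in> S}) \<le> B"
  shows "real (card S) \<le> real (card (fst ` S)) * B"
proof -
  have eq: "S = (SIGMA j:fst ` S. {k. (j, k) \<in> S})" by force
  have fin: "finite {k. (j, k) \<in> S}" for j
    using finite_imageI[OF assms(1), of snd] by (rule finite_subset[rotated]) force
  have "card S = (\<Sum>j\<in>fst ` S. card {k. (j, k) \<in> S})"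
    by (subst eq, subst card_SigmaI) (use assms(1) fin in auto)
  hence "real (card S) = (\<Sum>j\<in>fst ` S. real (card {k. (j, k) \<in> S}))" by simp
  also have "\<dots> \<le> (\<Sum>j\<in>fst ` S. B)" by (rule sum_mono) (use assms(2) in auto)
  finally show ?thesis by simp
qed

lemma weighted_lp_norm_block_le:
  assumes "0 < q" "0 < p" "mixed_mem q s p x"
  shows "2 powr (real j * \<sigma>) * lp_norm p (x j) \<le> 2 powr (- (real j * (s - \<sigma>))) * mixed_norm q s p x"
proof -
  have "2 powr (real j * \<sigma>) * lp_norm p (x j)
      \<le> 2 powr (real j * \<sigma>) * (2 powr (- (real j * s)) * mixed_norm q s p x)"
    using lp_norm_block_le[OF assms] by (intro mult_left_mono) auto
  also have "\<dots> = 2 powr (real j * \<sigma> + - (real j * s)) * mixed_norm q s p x"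
    by (simp add: mult.assoc[symmetric] flip: powr_add)
  finally show ?thesis by (simp add: algebra_simps)
qed

lemma weighted_lp_norm_block_le_mixed_norm:
  assumes "\<sigma> \<le> s" "0 < q" "0 < p" "mixed_mem q s p x"
  shows "2 powr (real j * \<sigma>) * lp_norm p (x j) \<le> mixed_norm q s p x"
proof -
  have "2 powr (- (real j * (s - \<sigma>))) \<le> 1"
    using powr_mono[of "- (real j * (s - \<sigma>))" 0 2] assms(1) by simp
  hence "2 powr (- (real j * (s - \<sigma>))) * mixed_norm q s p x \<le> mixed_norm q s p x"
    using mixed_norm_nonneg[OF assms(2,4)] by (simp add: mult_left_le_one_le)
  thus ?thesis using weighted_lp_norm_block_le[OF assms(2-4), of j \<sigma>] by linarith
qed

lemma c0_weighted_entries: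
  assumes "0 < P" "mixed_mem q s (ereal P) x" "c0 (\<lambda>j. 2 powr (real j * \<sigma>) * lp_norm (ereal P) (x j))"
  shows "c0 (\<lambda>(j, k). 2 powr (real j * \<sigma>) * x j k)"
proof (rule c0_SigmaI[OF _ assms(3)])
  show "c0 (\<lambda>k. 2 powr (real j * \<sigma>) * x j k)" for j
    using assms(1,2) by (intro c0_scale lp_mem_imp_c0[of P]) (auto simp: mixed_mem_iff)
  show "\<bar>2 powr (real j * \<sigma>) * x j k\<bar> \<le> 2 powr (real j * \<sigma>) * lp_norm (ereal P) (x j)" for j k
    using abs_entry_le_lp_norm_block[of "ereal P" q s x j k] assms(1,2) by (simp add: abs_mult)
qed

lemma powr_interpolation_weight_le:
  fixes j :: real
  assumes "0 \<le> j" "0 \<le> \<theta>" "\<sigma> \<le> s" "0 \<le> a"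
  shows "2 powr (j * t) * ((2 powr (- (j * \<sigma>))) powr (1 - \<theta>) * a powr \<theta>)
    \<le> 2 powr (- (j * (\<sigma> - t))) * (2 powr (j * s) * a) powr \<theta>"
proof -
  have "2 powr (j * t) * ((2 powr (- (j * \<sigma>))) powr (1 - \<theta>) * a powr \<theta>)
      = 2 powr (j * t + - (j * \<sigma>) * (1 - \<theta>)) * a powr \<theta>"
    by (simp add: powr_powr mult.assoc[symmetric] flip: powr_add)
  also have "\<dots> \<le> 2 powr (- (j * (\<sigma> - t)) + j * s * \<theta>) * a powr \<theta>"
  proof (intro mult_right_mono powr_mono)
    have "j * \<theta> * (\<sigma> - s) \<le> 0" using assms by (intro mult_nonneg_nonpos) auto
    thus "j * t + - (j * \<sigma>) * (1 - \<theta>) \<le> - (j * (\<sigma> - t)) + j * s * \<theta>" by (simp add: algebra_simps)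
  qed auto
  also have "\<dots> = 2 powr (- (j * (\<sigma> - t))) * (2 powr (j * s) * a) powr \<theta>"
    using assms(4) by (simp add: powr_mult powr_powr mult.assoc[symmetric] flip: powr_add)
  finally show ?thesis .
qed

lemma block_norm_interpolation:
  assumes "\<sigma> \<le> s" "0 < q" "0 < P" "ereal P < p" "mixed_mem q s (ereal P) x" "peak_bounded \<sigma> x"
  shows "block_norms t p x j
    \<le> 2 powr (- (real j * (\<sigma> - t))) * block_norms s (ereal P) x j powr (P / real_of_ereal p)"
proof -
  define \<theta> where "\<theta> = P / real_of_ereal p"
  have "0 \<le> \<theta>" using assms(3,4) by (cases p) (auto simp: \<theta>_def)
  have xj: "lp_mem (ereal P) (x j)" using assms(5) by (simp add: mixed_mem_iff)
  have "lp_norm p (x j) \<le> (2 powr (- (real j * \<sigma>))) powr (1 - \<theta>) * lp_norm (ereal P) (x j) powr \<theta>"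
    using lp_norm_interpolation[OF assms(3,4) xj] assms(6) by (simp add: peak_bounded_def \<theta>_def)
  hence "block_norms t p x j
      \<le> 2 powr (real j * t) * ((2 powr (- (real j * \<sigma>))) powr (1 - \<theta>) * lp_norm (ereal P) (x j) powr \<theta>)"
    unfolding block_norms_def by (intro mult_left_mono) auto
  also have "\<dots> \<le> 2 powr (- (real j * (\<sigma> - t))) * block_norms s (ereal P) x j powr \<theta>"
    unfolding block_norms_def using \<open>0 \<le> \<theta>\<close> assms(1) lp_norm_nonneg[of "ereal P" "x j"] assms(3) xj
    by (intro powr_interpolation_weight_le) auto
  finally show ?thesis by (simp add: \<theta>_def)
qed

text \<open>A peak in block \<open>j\<close> contributes \<open>2 powr (- j * \<sigma> * P)\<close> to \<open>lp_norm (ereal P) (x j) powr P\<close>,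
  which is at most \<open>(2 powr (- j * \<sigma>) * mixed_norm q s (ereal P) x) powr P\<close>.\<close>

lemma peaks_count_le:
  assumes "\<sigma> \<le> s" "0 < q" "0 < P" "mixed_mem q s (ereal P) x" "peaks \<sigma> x n"
  obtains J where "finite J" "0 < n \<Longrightarrow> J \<noteq> {}"
    "\<And>j. j \<in> J \<Longrightarrow> 1 \<le> 2 powr (real j * \<sigma>) * lp_norm (ereal P) (x j)"
    "real n \<le> real (card J) * mixed_norm q s (ereal P) x powr P"
proof -
  define X where "X = mixed_norm q s (ereal P) x"
  define m where "m = (\<lambda>j::nat. 2 powr (- (real j * \<sigma>)))"
  obtain S where S: "finite S" "card S = n" "\<And>j k. (j, k) \<in> S \<Longrightarrow> \<bar>x j k\<bar> = m j"
    using assms(5) by (auto simp: peaks_def m_def)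
  have xj: "lp_mem (ereal P) (x j)" for j using assms(4) by (simp add: mixed_mem_iff)
  have norm_le: "lp_norm (ereal P) (x j) \<le> m j * X" for j
  proof -
    have "lp_norm (ereal P) (x j) = m j * (2 powr (real j * \<sigma>) * lp_norm (ereal P) (x j))"
      by (simp add: m_def mult.assoc[symmetric] flip: powr_add)
    also have "\<dots> \<le> m j * X"
      using weighted_lp_norm_block_le_mixed_norm[OF assms(1,2) _ assms(4), of j] assms(3)
      by (intro mult_left_mono) (auto simp: m_def X_def)
    finally show ?thesis .
  qed
  have "real (card {k. (j, k) \<in> S}) \<le> X powr P" for j
  proof -
    have "finite {k. (j, k) \<in> S}"
      using finite_imageI[OF S(1), of snd] by (rule finite_subset[rotated]) force
    hence "real (card {k. (j, k) \<in> S}) * m j powr P \<le> lp_norm (ereal P) (x j) powr P"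
      using card_mult_powr_le_lp_norm[OF assms(3) xj] S(3) by blast
    also have "\<dots> \<le> (m j * X) powr P"
      using norm_le[of j] lp_norm_nonneg[of "ereal P" "x j"] xj assms(3) by (intro powr_mono2) auto
    also have "\<dots> = X powr P * m j powr P"
      using mixed_norm_nonneg[OF assms(2,4)] by (simp add: m_def X_def powr_mult)
    finally show ?thesis by (simp add: m_def)
  qed
  hence "real n \<le> real (card (fst ` S)) * X powr P"
    using card_le_card_fst_mult[OF S(1)] S(2) by simp
  moreover have "1 \<le> 2 powr (real j * \<sigma>) * lp_norm (ereal P) (x j)" if jS: "j \<in> fst ` S" for j
  proof -
    obtain k where "(j, k) \<in> S" using jS by force
    hence "m j \<le> lp_norm (ereal P) (x j)"
      using S(3) abs_entry_le_lp_norm_block[of "ereal P" q s x j k] assms(3,4) by simp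
    hence "2 powr (real j * \<sigma>) * m j \<le> 2 powr (real j * \<sigma>) * lp_norm (ereal P) (x j)"
      by (intro mult_left_mono) auto
    thus ?thesis by (simp add: m_def flip: powr_add)
  qed
  moreover have "0 < n \<Longrightarrow> fst ` S \<noteq> {}" using S(1,2) by auto
  ultimately show ?thesis using S(1) by (intro that[of "fst ` S"]) (auto simp: X_def)
qed

lemma real_card_le_of_bounded:
  assumes "0 \<le> B" "\<And>j. j \<in> J \<Longrightarrow> real j \<le> B"
  shows "real (card J) \<le> B + 1"
proof -
  have "J \<subseteq> {..nat \<lfloor>B\<rfloor>}" using assms(2) by (auto simp: le_nat_floor)
  hence "card J \<le> nat \<lfloor>B\<rfloor> + 1" using card_mono[of "{..nat \<lfloor>B\<rfloor>}" J] by simp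
  thus ?thesis using assms(1) by linarith
qed

lemma c0_weighted_entries_of_less:
  assumes "\<sigma> < s" "0 < q" "0 < P" "mixed_mem q s (ereal P) x"
  shows "c0 (\<lambda>(j, k). 2 powr (real j * \<sigma>) * x j k)"
proof (rule c0_weighted_entries[OF assms(3,4)])
  have "c0 (\<lambda>j. mixed_norm q s (ereal P) x * 2 powr (- (real j * (s - \<sigma>))))"
    using lp_mem_geometric[of "ereal 1" "s - \<sigma>"] assms(1)
    by (intro c0_scale lp_mem_imp_c0[of 1]) auto
  moreover have "\<bar>2 powr (real j * \<sigma>) * lp_norm (ereal P) (x j)\<bar>
      \<le> \<bar>mixed_norm q s (ereal P) x * 2 powr (- (real j * (s - \<sigma>)))\<bar>" for j
    using weighted_lp_norm_block_le[OF assms(2) _ assms(4), of j \<sigma>] assms(3)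
      lp_norm_nonneg[of "ereal P" "x j"] assms(4) mixed_norm_nonneg[OF assms(2,4)]
    by (simp add: mixed_mem_iff mult.commute)
  ultimately show "c0 (\<lambda>j. 2 powr (real j * \<sigma>) * lp_norm (ereal P) (x j))"
    by (rule c0_mono)
qed

lemma mixed_norm_le_of_peak_bounded:
  assumes "\<sigma> \<le> s" "0 < q0" "0 < P" "ereal P < p1" "0 < q1" "0 < d"
    and "mixed_mem q0 s (ereal P) x" "peak_bounded \<sigma> x" "\<sigma> - t = d"
  shows "mixed_norm q1 t p1 x
    \<le> lp_norm q1 (\<lambda>j. 2 powr (- (real j * d))) * mixed_norm q0 s (ereal P) x powr (P / real_of_ereal p1)"
proof -
  define X where "X = mixed_norm q0 s (ereal P) x"
  define \<theta> where "\<theta> = P / real_of_ereal p1"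
  have "0 \<le> \<theta>" using assms(3,4) by (cases p1) (auto simp: \<theta>_def)
  have g: "lp_mem q1 (\<lambda>j. X powr \<theta> * 2 powr (- (real j * d)))
      \<and> lp_norm q1 (\<lambda>j. X powr \<theta> * 2 powr (- (real j * d)))
        = X powr \<theta> * lp_norm q1 (\<lambda>j. 2 powr (- (real j * d)))"
    using lp_scale[OF assms(5) lp_mem_geometric[OF assms(5,6)]] by simp
  have "\<bar>block_norms t p1 x j\<bar> \<le> \<bar>X powr \<theta> * 2 powr (- (real j * d))\<bar>" for j
  proof -
    have xj: "lp_mem p1 (x j)"
      using lp_norm_mono_exponent[of P p1 "x j"] assms(3,4,7) by (auto simp: mixed_mem_iff)
    have "block_norms t p1 x j \<le> 2 powr (- (real j * d)) * block_norms s (ereal P) x j powr \<theta>"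
      using block_norm_interpolation[OF assms(1,2,3,4,7,8), of t j] unfolding assms(9) \<theta>_def .
    also have "\<dots> \<le> 2 powr (- (real j * d)) * X powr \<theta>"
      using block_norm_le_mixed_norm[OF assms(2) _ assms(7)] block_norms_nonneg[OF _ assms(7)]
        \<open>0 \<le> \<theta>\<close> assms(3) by (intro mult_left_mono powr_mono2) (auto simp: X_def)
    finally show ?thesis
      using lp_norm_nonneg[OF _ xj] assms(3,4) by (cases p1) (auto simp: block_norms_def mult.commute)
  qed
  hence "lp_norm q1 (block_norms t p1 x) \<le> X powr \<theta> * lp_norm q1 (\<lambda>j. 2 powr (- (real j * d)))"
    using lp_mono[OF assms(5), of _ "block_norms t p1 x"] g by fastforce
  thus ?thesis by (simp add: mixed_norm_eq X_def \<theta>_def mult.commute)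
qed

lemma peaks_count_le_of_less:
  assumes "\<sigma> < s" "0 < q" "0 < P" "mixed_mem q s (ereal P) x" "peaks \<sigma> x n" "0 < n"
  shows "1 \<le> mixed_norm q s (ereal P) x \<and>
    real n \<le> (log 2 (mixed_norm q s (ereal P) x) / (s - \<sigma>) + 1) * mixed_norm q s (ereal P) x powr P"
proof -
  define X where "X = mixed_norm q s (ereal P) x"
  obtain J where J: "J \<noteq> {}" "\<And>j. j \<in> J \<Longrightarrow> 1 \<le> 2 powr (real j * \<sigma>) * lp_norm (ereal P) (x j)"
    "real n \<le> real (card J) * X powr P"
    using peaks_count_le[OF _ assms(2-5)] assms(1,6) unfolding X_def by (metis less_imp_le)
  have decay: "2 powr (real j * (s - \<sigma>)) \<le> X" if "j \<in> J" for j
  proof -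
    have "1 \<le> 2 powr (- (real j * (s - \<sigma>))) * X"
      using J(2)[OF that] weighted_lp_norm_block_le[OF assms(2) _ assms(4), of j \<sigma>] assms(3)
      by (simp add: X_def)
    hence "2 powr (real j * (s - \<sigma>)) * 1
        \<le> 2 powr (real j * (s - \<sigma>)) * (2 powr (- (real j * (s - \<sigma>))) * X)"
      by (intro mult_left_mono) auto
    thus ?thesis by (simp add: mult.assoc[symmetric] flip: powr_add)
  qed
  have X1: "1 \<le> X"
  proof -
    obtain j where "j \<in> J" using J(1) by blast
    thus ?thesis using decay[of j] ge_one_powr_ge_zero[of 2 "real j * (s - \<sigma>)"] assms(1) by simp
  qed
  have "real (card J) \<le> log 2 X / (s - \<sigma>) + 1"
  proof (rule real_card_le_of_bounded)
    show "0 \<le> log 2 X / (s - \<sigma>)" using X1 assms(1) by simp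
    show "real j \<le> log 2 X / (s - \<sigma>)" if "j \<in> J" for j
      using log_mono[of 2 "2 powr (real j * (s - \<sigma>))" X] decay[OF that] assms(1)
      by (simp add: field_simps)
  qed
  hence "real n \<le> (log 2 X / (s - \<sigma>) + 1) * X powr P"
    using J(3) by (meson mult_right_mono order_trans powr_ge_zero)
  thus ?thesis using X1 by (simp add: X_def)
qed

lemma mono_on_log_powr: "0 < d \<Longrightarrow> 0 \<le> P \<Longrightarrow> mono_on {1..} (\<lambda>X. (log 2 X / d + 1) * X powr P)"
  by (rule mono_onI) (auto intro!: mult_mono divide_right_mono log_mono powr_mono2 add_nonneg_nonneg)

lemma c0_weighted_entries_of_finite:
  assumes "0 < Q" "0 < P" "mixed_mem (ereal Q) s (ereal P) x"
  shows "c0 (\<lambda>(j, k). 2 powr (real j * s) * x j k)"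
  using c0_weighted_entries[OF assms(2,3)] lp_mem_imp_c0[OF assms(1)] assms(3)
  by (simp add: mixed_mem_iff block_norms_def)

lemma mixed_norm_le_of_peak_bounded_same_smoothness:
  assumes "0 < Q" "ereal Q < q1" "0 < P" "ereal P < p1"
    and "mixed_mem (ereal Q) s (ereal P) x" "peak_bounded s x"
    and "P / real_of_ereal p1 \<le> \<Lambda>" "Q / real_of_ereal q1 \<le> \<Lambda>" "0 < \<Lambda>" "\<Lambda> \<le> 1"
  shows "mixed_norm q1 s p1 x \<le> mixed_norm (ereal Q) s (ereal P) x powr \<Lambda>"
proof -
  define a where "a = block_norms s (ereal P) x"
  have a0: "0 \<le> a j" for j using block_norms_nonneg[OF _ assms(5)] assms(3) by (simp add: a_def)
  have b_le: "\<bar>block_norms s p1 x j\<bar> \<le> \<bar>a j powr \<Lambda>\<bar>" for j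
  proof -
    have xj: "lp_mem p1 (x j) \<and> lp_norm p1 (x j) \<le> lp_norm (ereal P) (x j)"
      using lp_norm_mono_exponent[of P p1 "x j"] assms(3-5) by (auto simp: mixed_mem_iff)
    have b0: "0 \<le> block_norms s p1 x j"
      using lp_norm_nonneg[of p1 "x j"] xj assms(3,4) by (cases p1) (auto simp: block_norms_def)
    have "block_norms s p1 x j \<le> a j"
      using xj by (simp add: a_def block_norms_def)
    moreover have "block_norms s p1 x j \<le> a j powr (P / real_of_ereal p1)"
      using block_norm_interpolation[OF order_refl _ assms(3,4,5,6), where t=s and j=j] assms(1)
      by (simp add: a_def)
    moreover have "a j \<le> a j powr \<Lambda> \<or> a j powr (P / real_of_ereal p1) \<le> a j powr \<Lambda>"
    proof (cases "a j \<le> 1")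
      case True
      thus ?thesis using powr_mono'[of \<Lambda> 1 "a j"] a0[of j] assms(10) by simp
    next
      case False
      thus ?thesis using assms(7) by (intro disjI2 powr_mono) auto
    qed
    ultimately show ?thesis using b0 a0[of j] by auto
  qed
  have "q1 = \<infinity> \<or> (\<exists>R. q1 = ereal R \<and> Q \<le> \<Lambda> * R)"
  proof (cases q1)
    case (real R)
    hence "Q / R \<le> \<Lambda>" "0 < R" using assms(1,2,8) by auto
    thus ?thesis using real by (auto simp: divide_le_eq)
  qed (use assms(2) in auto)
  hence pw: "lp_mem q1 (\<lambda>j. a j powr \<Lambda>) \<and> lp_norm q1 (\<lambda>j. a j powr \<Lambda>) \<le> lp_norm (ereal Q) a powr \<Lambda>"
    using lp_norm_powr_le[OF assms(1) _ a0 assms(9,10)] assms(5) by (simp add: mixed_mem_iff a_def)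
  have "0 < q1" using assms(1,2) by (cases q1) auto
  hence "lp_norm q1 (block_norms s p1 x) \<le> lp_norm q1 (\<lambda>j. a j powr \<Lambda>)"
    using lp_mono[of q1 "\<lambda>j. a j powr \<Lambda>" "block_norms s p1 x"] b_le pw by blast
  thus ?thesis using pw by (simp add: mixed_norm_eq a_def)
qed

lemma peaks_count_le_of_finite:
  assumes "0 < Q" "0 < P" "mixed_mem (ereal Q) s (ereal P) x" "peaks s x n" "0 < n"
  shows "1 \<le> mixed_norm (ereal Q) s (ereal P) x \<and>
    real n \<le> mixed_norm (ereal Q) s (ereal P) x powr Q * mixed_norm (ereal Q) s (ereal P) x powr P"
proof -
  define X where "X = mixed_norm (ereal Q) s (ereal P) x"
  obtain J where J: "finite J" "J \<noteq> {}" "\<And>j. j \<in> J \<Longrightarrow> 1 \<le> block_norms s (ereal P) x j"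
    "real n \<le> real (card J) * X powr P"
    using peaks_count_le[of s s "ereal Q" P x n] assms unfolding X_def block_norms_def by auto
  have X1: "1 \<le> X"
  proof -
    obtain j where "j \<in> J" using J(2) by blast
    thus ?thesis using J(3) block_norm_le_mixed_norm[OF _ _ assms(3), of j] assms(1,2)
      by (fastforce simp: X_def)
  qed
  have "real (card J) = (\<Sum>j\<in>J. 1)" by simp
  also have "\<dots> \<le> (\<Sum>j\<in>J. \<bar>block_norms s (ereal P) x j\<bar> powr Q)"
    using J(3) assms(1) by (intro sum_mono ge_one_powr_ge_zero) fastforce+
  also have "\<dots> \<le> X powr Q"
    using sum_powr_le_lp_norm[OF assms(1) _ J(1)] assms(3) by (simp add: X_def mixed_mem_iff mixed_norm_eq)
  finally have "real n \<le> X powr Q * X powr P"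
    using J(4) by (meson mult_right_mono order_trans powr_ge_zero)
  thus ?thesis using X1 by (simp add: X_def)
qed

lemma fin_strictly_singular_of_smoothness_less:
  assumes "t < s" "0 < p0" "p0 < p1" "0 < q0" "0 < q1"
  shows "fin_strictly_singular (mixed_space q0 s p0) (mixed_norm q0 s p0) (mixed_norm q1 t p1) id"
proof -
  obtain P where P: "p0 = ereal P" "0 < P" using assms(2,3) by (cases p0) auto
  define \<sigma> where "\<sigma> = (s + t) / 2"
  have \<sigma>: "\<sigma> < s" "\<sigma> \<le> s" "0 < \<sigma> - t" using assms(1) by (simp_all add: \<sigma>_def)
  define C where "C = lp_norm q1 (\<lambda>j. 2 powr (- (real j * (\<sigma> - t))))"
  have "1 \<le> C"
    using abs_le_lp_norm[OF assms(5) lp_mem_geometric[OF assms(5) \<sigma>(3)], of 0] by (simp add: C_def)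
  moreover have "P / real_of_ereal p1 < 1" using P assms(3) by (cases p1) auto
  moreover have "0 < p1" using assms(2,3) by simp
  moreover note mixed_space_embedding[OF less_imp_le[OF assms(1)] assms(2-5)] assms(1)
  moreover have "c0 (\<lambda>(j, k). 2 powr (real j * \<sigma>) * x j k)" if "mixed_mem q0 s p0 x" for x
    using c0_weighted_entries_of_less[OF \<sigma>(1) assms(4) P(2)] that P(1) by simp
  moreover have "mixed_norm q1 t p1 x \<le> C * mixed_norm q0 s p0 x powr (P / real_of_ereal p1)"
    if "mixed_mem q0 s p0 x" "peak_bounded \<sigma> x" for x
    using mixed_norm_le_of_peak_bounded[OF \<sigma>(2) assms(4) P(2) _ assms(5) \<sigma>(3)] that assms(3) P(1)
    by (simp add: C_def)
  moreover have "1 \<le> mixed_norm q0 s p0 x \<and>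
      real n \<le> (log 2 (mixed_norm q0 s p0 x) / (s - \<sigma>) + 1) * mixed_norm q0 s p0 x powr P"
    if "mixed_mem q0 s p0 x" "peaks \<sigma> x n" "0 < n" for x n
    using peaks_count_le_of_less[OF \<sigma>(1) assms(4) P(2)] that P(1) by simp
  moreover have "mono_on {1..} (\<lambda>X. (log 2 X / (s - \<sigma>) + 1) * X powr P)"
    using \<sigma>(1) P(2) by (intro mono_on_log_powr) auto
  ultimately show ?thesis
    using assms(2,4,5) by (intro fin_strictly_singular_mixed_if_peaks[where \<sigma>=\<sigma>]) auto
qed

lemma fin_strictly_singular_of_exponent_less:
  assumes "0 < p0" "p0 < p1" "0 < q0" "q0 < q1"
  shows "fin_strictly_singular (mixed_space q0 s p0) (mixed_norm q0 s p0) (mixed_norm q1 s p1) id"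
proof -
  obtain P where P: "p0 = ereal P" "0 < P" using assms(1,2) by (cases p0) auto
  obtain Q where Q: "q0 = ereal Q" "0 < Q" using assms(3,4) by (cases q0) auto
  define \<Lambda> where "\<Lambda> = max (1/2) (max (P / real_of_ereal p1) (Q / real_of_ereal q1))"
  have \<Lambda>: "\<Lambda> < 1" using P Q assms(2,4) by (cases p1; cases q1) (auto simp: \<Lambda>_def)
  have pos: "0 < p1" "0 < q1" using assms by auto
  have emb: "mixed_space q0 s p0 \<subseteq> mixed_space q1 s p1"
    using mixed_space_embedding[OF order_refl assms(1,2,3) pos(2)] assms(4) by blast
  have c0: "c0 (\<lambda>(j, k). 2 powr (real j * s) * x j k)" if "mixed_mem q0 s p0 x" for x
    using c0_weighted_entries_of_finite[OF Q(2) P(2)] that P(1) Q(1) by simp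
  have upper: "mixed_norm q1 s p1 x \<le> 1 * mixed_norm q0 s p0 x powr \<Lambda>"
    if "mixed_mem q0 s p0 x" "peak_bounded s x" for x
    using mixed_norm_le_of_peak_bounded_same_smoothness[OF Q(2) _ P(2) _ _ _ _ _ _ less_imp_le[OF \<Lambda>]]
      that assms(2,4) P(1) Q(1) by (simp add: \<Lambda>_def)
  have count: "1 \<le> mixed_norm q0 s p0 x \<and>
      real n \<le> mixed_norm q0 s p0 x powr Q * mixed_norm q0 s p0 x powr P"
    if "mixed_mem q0 s p0 x" "peaks s x n" "0 < n" for x n
    using peaks_count_le_of_finite[OF Q(2) P(2)] that P(1) Q(1) by simp
  have mono: "mono_on {1..} (\<lambda>X::real. X powr Q * X powr P)"
    by (rule mono_onI) (auto intro!: mult_mono powr_mono2 simp: P(2) Q(2) less_imp_le)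
  show ?thesis
    by (rule fin_strictly_singular_mixed_if_peaks[OF assms(1,3) pos emb c0 upper zero_less_one[where 'a=real] \<Lambda> count mono])
qed

theorem corollary3p6:
  fixes s t :: real and p0 p1 q0 q1 :: ereal
  assumes "s \<ge> t"
    and "0 < p0" and "p0 < p1" and "p1 \<le> \<infinity>"
    and "0 < q0" and "q0 \<le> \<infinity>" and "0 < q1" and "q1 \<le> \<infinity>"
    and "s > t \<or> q0 < q1"
  shows "mixed_space q0 s p0 \<subseteq> mixed_space q1 t p1
    \<and> fin_strictly_singular (mixed_space q0 s p0) (mixed_norm q0 s p0) (mixed_norm q1 t p1) id
    \<and> strictly_singular (mixed_space q0 s p0) (mixed_norm q0 s p0) (mixed_norm q1 t p1) id"
proof -
  have fss: "fin_strictly_singular (mixed_space q0 s p0) (mixed_norm q0 s p0) (mixed_norm q1 t p1) id"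
  proof (cases "t < s")
    case True
    thus ?thesis using fin_strictly_singular_of_smoothness_less assms(2,3,5,7) by blast
  next
    case False
    hence "t = s" "q0 < q1" using assms(1,9) by auto
    thus ?thesis using fin_strictly_singular_of_exponent_less assms(2,3,5) by blast
  qed
  show ?thesis
    using mixed_space_embedding[OF assms(1,2,3,5,7,9)] fss
      fin_strictly_singular_imp_strictly_singular[OF fss] by blast
qed

end
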